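(* Let $0\le k<n$ and let $\Phi:\mathfrak{B}([n])^{op}\to\mathbf{Gpd}$ be a contravariant functor. Consider the forgetful (restriction) functor $\gamma_k:\operatorname{2lim}_{\mathfrak{B}([n])}\Phi\to\operatorname{2lim}_{\mathfrak{B}([n],k)}\Phi$. Then: (i) $\gamma_k$ is faithful; (ii) if $k\le n-2$, $\gamma_k$ is full and faithful; (iii) if $k\le n-3$, $\gamma_k$ is an equivalence of categories.
   Context: $[n]=\{1,\dots,n\}$; $\mathfrak{B}([n])$ is the poset of proper subsets of $[n]$ ordered by inclusion, and $\mathfrak{B}([n],k)$ is the subposet of proper subsets $S\subsetneq[n]$ with $|S|\ge k$; $\Phi$ on $\mathfrak{B}([n],k)$ denotes the restriction. For $U\subseteq V$, $\Phi_{U,V}:\Phi(V)\to\Phi(U)$. For a functor $\Psi:I^{op}\to\mathbf{Gpd}$ on a poset, the 2-limit $\operatorname{2lim}\Psi$ is the groupoid whose objects are families $(a_U,\alpha_{U,V})$ with $a_U\in\Psi(U)$ and isomorphisms $\alpha_{U,V}:\Psi_{U,V}(a_V)\to a_U$ for $U\le V$ satisfying $\alpha_{U,U}=\mathrm{id}$ and $\alpha_{U,W}=\alpha_{U,V}\circ\Psi_{U,V}(\alpha_{V,W})$ for $U\le V\le W$, and whose morphisms are families $g_U:a_U\to b_U$ with $g_U\circ\alpha_{U,V}=\beta_{U,V}\circ\Psi_{U,V}(g_V)$. *)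

theory Defs
  imports Main
begin

record ('o,'m) gcat =
  Ob   :: "'o set"
  Hom  :: "'o \<Rightarrow> 'o \<Rightarrow> 'm set"
  Comp :: "'m \<Rightarrow> 'm \<Rightarrow> 'm"   (* Comp C g f = g after f *)
  Id   :: "'o \<Rightarrow> 'm"

definition category :: "('o,'m) gcat \<Rightarrow> bool" where
  "category C \<longleftrightarrow>
     (\<forall>x y. Hom C x y \<noteq> {} \<longrightarrow> x \<in> Ob C \<and> y \<in> Ob C) \<and>
     (\<forall>x\<in>Ob C. Id C x \<in> Hom C x x) \<and>
     (\<forall>x y z f g. f \<in> Hom C x y \<and> g \<in> Hom C y z \<longrightarrow> Comp C g f \<in> Hom C x z) \<and>
     (\<forall>x y f. f \<in> Hom C x y \<longrightarrow> Comp C f (Id C x) = f \<and> Comp C (Id C y) f = f) \<and>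
     (\<forall>w x y z f g h. f \<in> Hom C w x \<and> g \<in> Hom C x y \<and> h \<in> Hom C y z \<longrightarrow>
        Comp C h (Comp C g f) = Comp C (Comp C h g) f)"

definition iso :: "('o,'m) gcat \<Rightarrow> 'o \<Rightarrow> 'o \<Rightarrow> 'm \<Rightarrow> bool" where
  "iso C x y f \<longleftrightarrow> f \<in> Hom C x y \<and>
     (\<exists>g\<in>Hom C y x. Comp C g f = Id C x \<and> Comp C f g = Id C y)"

definition groupoid :: "('o,'m) gcat \<Rightarrow> bool" where
  "groupoid C \<longleftrightarrow> category C \<and> (\<forall>x y f. f \<in> Hom C x y \<longrightarrow> iso C x y f)"

definition is_functor ::
  "('o,'m) gcat \<Rightarrow> ('p,'n) gcat \<Rightarrow> ('o \<Rightarrow> 'p) \<Rightarrow> ('m \<Rightarrow> 'n) \<Rightarrow> bool" where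
  "is_functor C D FO FM \<longleftrightarrow>
     (\<forall>x\<in>Ob C. FO x \<in> Ob D) \<and>
     (\<forall>x y f. f \<in> Hom C x y \<longrightarrow> FM f \<in> Hom D (FO x) (FO y)) \<and>
     (\<forall>x\<in>Ob C. FM (Id C x) = Id D (FO x)) \<and>
     (\<forall>x y z f g. f \<in> Hom C x y \<and> g \<in> Hom C y z \<longrightarrow> FM (Comp C g f) = Comp D (FM g) (FM f))"

definition faithful ::
  "('o,'m) gcat \<Rightarrow> ('p,'n) gcat \<Rightarrow> ('o \<Rightarrow> 'p) \<Rightarrow> ('m \<Rightarrow> 'n) \<Rightarrow> bool" where
  "faithful C D FO FM \<longleftrightarrow> is_functor C D FO FM \<and>
     (\<forall>x y f g. f \<in> Hom C x y \<and> g \<in> Hom C x y \<and> FM f = FM g \<longrightarrow> f = g)"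

definition full ::
  "('o,'m) gcat \<Rightarrow> ('p,'n) gcat \<Rightarrow> ('o \<Rightarrow> 'p) \<Rightarrow> ('m \<Rightarrow> 'n) \<Rightarrow> bool" where
  "full C D FO FM \<longleftrightarrow> is_functor C D FO FM \<and>
     (\<forall>x\<in>Ob C. \<forall>y\<in>Ob C. \<forall>h\<in>Hom D (FO x) (FO y). \<exists>f\<in>Hom C x y. FM f = h)"

definition nat_iso ::
  "('o,'m) gcat \<Rightarrow> ('p,'n) gcat \<Rightarrow> ('o \<Rightarrow> 'p) \<Rightarrow> ('m \<Rightarrow> 'n) \<Rightarrow> ('o \<Rightarrow> 'p) \<Rightarrow> ('m \<Rightarrow> 'n)
     \<Rightarrow> ('o \<Rightarrow> 'n) \<Rightarrow> bool" where
  "nat_iso C D F1O F1M F2O F2M eta \<longleftrightarrow>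
     (\<forall>x\<in>Ob C. iso D (F1O x) (F2O x) (eta x)) \<and>
     (\<forall>x y f. f \<in> Hom C x y \<longrightarrow> Comp D (eta y) (F1M f) = Comp D (F2M f) (eta x))"

definition equivalence ::
  "('o,'m) gcat \<Rightarrow> ('p,'n) gcat \<Rightarrow> ('o \<Rightarrow> 'p) \<Rightarrow> ('m \<Rightarrow> 'n) \<Rightarrow> bool" where
  "equivalence C D FO FM \<longleftrightarrow> is_functor C D FO FM \<and>
     (\<exists>GO GM eta eps. is_functor D C GO GM \<and>
        nat_iso C C id id (GO \<circ> FO) (GM \<circ> FM) eta \<and>
        nat_iso D D (FO \<circ> GO) (FM \<circ> GM) id id eps)"

text \<open>A (strict) functor I^op -> Gpd, I a set of sets ordered by inclusion.
  PO U V, PM U V are the object and morphism parts of Phi_{U,V} : Phi V -> Phi U.\<close>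
definition gpd_diagram ::
  "'i set set \<Rightarrow> ('i set \<Rightarrow> ('o,'m) gcat) \<Rightarrow> ('i set \<Rightarrow> 'i set \<Rightarrow> 'o \<Rightarrow> 'o)
     \<Rightarrow> ('i set \<Rightarrow> 'i set \<Rightarrow> 'm \<Rightarrow> 'm) \<Rightarrow> bool" where
  "gpd_diagram I Phi PO PM \<longleftrightarrow>
     (\<forall>U\<in>I. groupoid (Phi U)) \<and>
     (\<forall>U\<in>I. \<forall>V\<in>I. U \<subseteq> V \<longrightarrow> is_functor (Phi V) (Phi U) (PO U V) (PM U V)) \<and>
     (\<forall>U\<in>I. (\<forall>x\<in>Ob (Phi U). PO U U x = x) \<and> (\<forall>x y f. f \<in> Hom (Phi U) x y \<longrightarrow> PM U U f = f)) \<and>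
     (\<forall>U\<in>I. \<forall>V\<in>I. \<forall>W\<in>I. U \<subseteq> V \<and> V \<subseteq> W \<longrightarrow>
        (\<forall>x\<in>Ob (Phi W). PO U V (PO V W x) = PO U W x) \<and>
        (\<forall>x y f. f \<in> Hom (Phi W) x y \<longrightarrow> PM U V (PM V W f) = PM U W f))"

text \<open>The 2-limit groupoid. Objects are pairs (a, alpha), morphisms families g;
  all families are extensional (undefined outside the index poset).\<close>
definition twolim ::
  "'i set set \<Rightarrow> ('i set \<Rightarrow> ('o,'m) gcat) \<Rightarrow> ('i set \<Rightarrow> 'i set \<Rightarrow> 'o \<Rightarrow> 'o)
     \<Rightarrow> ('i set \<Rightarrow> 'i set \<Rightarrow> 'm \<Rightarrow> 'm)
     \<Rightarrow> (('i set \<Rightarrow> 'o) \<times> ('i set \<Rightarrow> 'i set \<Rightarrow> 'm), 'i set \<Rightarrow> 'm) gcat" where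
  "twolim I Phi PO PM =
    (let obs = {(a, al).
           (\<forall>U\<in>I. a U \<in> Ob (Phi U)) \<and> (\<forall>U. U \<notin> I \<longrightarrow> a U = undefined) \<and>
           (\<forall>U\<in>I. \<forall>V\<in>I. U \<subseteq> V \<longrightarrow> al U V \<in> Hom (Phi U) (PO U V (a V)) (a U)) \<and>
           (\<forall>U V. \<not> (U \<in> I \<and> V \<in> I \<and> U \<subseteq> V) \<longrightarrow> al U V = undefined) \<and>
           (\<forall>U\<in>I. al U U = Id (Phi U) (a U)) \<and>
           (\<forall>U\<in>I. \<forall>V\<in>I. \<forall>W\<in>I. U \<subseteq> V \<and> V \<subseteq> W \<longrightarrow>
              al U W = Comp (Phi U) (al U V) (PM U V (al V W)))}
     in \<lparr> Ob = obs,
          Hom = (\<lambda>A B. {g. A \<in> obs \<and> B \<in> obs \<and>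
                   (\<forall>U\<in>I. g U \<in> Hom (Phi U) (fst A U) (fst B U)) \<and>
                   (\<forall>U. U \<notin> I \<longrightarrow> g U = undefined) \<and>
                   (\<forall>U\<in>I. \<forall>V\<in>I. U \<subseteq> V \<longrightarrow>
                      Comp (Phi U) (g U) (snd A U V) = Comp (Phi U) (snd B U V) (PM U V (g V)))}),
          Comp = (\<lambda>g f U. if U \<in> I then Comp (Phi U) (g U) (f U) else undefined),
          Id = (\<lambda>A U. if U \<in> I then Id (Phi U) (fst A U) else undefined) \<rparr>)"

definition resO :: "'i set set \<Rightarrow> ('i set \<Rightarrow> 'o) \<times> ('i set \<Rightarrow> 'i set \<Rightarrow> 'm)
                      \<Rightarrow> ('i set \<Rightarrow> 'o) \<times> ('i set \<Rightarrow> 'i set \<Rightarrow> 'm)" where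
  "resO J A = ((\<lambda>U. if U \<in> J then fst A U else undefined),
               (\<lambda>U V. if U \<in> J \<and> V \<in> J \<and> U \<subseteq> V then snd A U V else undefined))"

definition resM :: "'i set set \<Rightarrow> ('i set \<Rightarrow> 'm) \<Rightarrow> ('i set \<Rightarrow> 'm)" where
  "resM J g = (\<lambda>U. if U \<in> J then g U else undefined)"

definition Bposet :: "nat \<Rightarrow> nat set set" where
  "Bposet n = {S. S \<subset> {1..n}}"

definition Bposet_k :: "nat \<Rightarrow> nat \<Rightarrow> nat set set" where
  "Bposet_k n k = {S. S \<subset> {1..n} \<and> k \<le> card S}"

end

theory Submission
  imports Defs
begin

text \<open>
  Every proper subset \<open>U\<close> of \<open>[n]\<close> lies in a coatom \<open>M = [n] - {i}\<close>, and the coatoms lie in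
  \<open>\<B>([n],k)\<close> because \<open>k < n\<close>. For an object \<open>(a, \<alpha>)\<close> of the 2-limit, \<open>\<alpha>(U,M)\<close> identifies
  \<open>a(U)\<close> with \<open>\<Phi>(U,M)(a(M))\<close>, so a morphism is determined by its components on \<open>\<B>([n],k)\<close>.
  If pairwise intersections of coatoms lie in \<open>\<B>([n],k)\<close> (\<open>k \<le> n - 2\<close>), the component at \<open>U\<close>
  forced by a morphism on \<open>\<B>([n],k)\<close> does not depend on the coatom chosen, which gives fullness.
  If triple intersections lie in \<open>\<B>([n],k)\<close> (\<open>k \<le> n - 3\<close>), an object on \<open>\<B>([n],k)\<close> extends by
  putting \<open>\<Phi>(U,M)(a(M))\<close> at \<open>U\<close>, glued along the isomorphisms \<open>\<alpha>(T,M)\<inverse> \<circ> \<alpha>(T,M')\<close> with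
  \<open>T = M \<inter> M'\<close>; their cocycle condition is checked on triple intersections, and this extension
  is a quasi-inverse of the restriction.
\<close>

lemma comp_in_Hom: "category C \<Longrightarrow> f \<in> Hom C x y \<Longrightarrow> g \<in> Hom C y z \<Longrightarrow> Comp C g f \<in> Hom C x z"
  unfolding category_def by blast

lemma comp_assoc: "category C \<Longrightarrow> f \<in> Hom C w x \<Longrightarrow> g \<in> Hom C x y \<Longrightarrow> h \<in> Hom C y z \<Longrightarrow>
    Comp C h (Comp C g f) = Comp C (Comp C h g) f"
  unfolding category_def by blast

lemma comp_Id_left: "category C \<Longrightarrow> f \<in> Hom C x y \<Longrightarrow> Comp C (Id C y) f = f"
  unfolding category_def by blast

lemma comp_Id_right: "category C \<Longrightarrow> f \<in> Hom C x y \<Longrightarrow> Comp C f (Id C x) = f"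
  unfolding category_def by blast

lemma Id_in_Hom: "category C \<Longrightarrow> x \<in> Ob C \<Longrightarrow> Id C x \<in> Hom C x x"
  unfolding category_def by blast

lemma Hom_dom_in_Ob: "category C \<Longrightarrow> f \<in> Hom C x y \<Longrightarrow> x \<in> Ob C"
  unfolding category_def by blast

lemma groupoid_category: "groupoid C \<Longrightarrow> category C"
  unfolding groupoid_def by blast

lemma groupoid_iso: "groupoid C \<Longrightarrow> f \<in> Hom C x y \<Longrightarrow> iso C x y f"
  unfolding groupoid_def by blast

definition inv_mor :: "('o,'m) gcat \<Rightarrow> 'o \<Rightarrow> 'o \<Rightarrow> 'm \<Rightarrow> 'm" where
  "inv_mor C x y f = (SOME g. g \<in> Hom C y x \<and> Comp C g f = Id C x \<and> Comp C f g = Id C y)"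

lemma inv_mor:
  assumes "groupoid C" "f \<in> Hom C x y"
  shows inv_mor_in_Hom: "inv_mor C x y f \<in> Hom C y x"
    and comp_inv_mor_left: "Comp C (inv_mor C x y f) f = Id C x"
    and comp_inv_mor_right: "Comp C f (inv_mor C x y f) = Id C y"
proof -
  have "\<exists>g. g \<in> Hom C y x \<and> Comp C g f = Id C x \<and> Comp C f g = Id C y"
    using assms unfolding groupoid_def iso_def by blast
  then have "inv_mor C x y f \<in> Hom C y x \<and> Comp C (inv_mor C x y f) f = Id C x \<and>
      Comp C f (inv_mor C x y f) = Id C y"
    unfolding inv_mor_def by (rule someI_ex)
  then show "inv_mor C x y f \<in> Hom C y x" "Comp C (inv_mor C x y f) f = Id C x"
    "Comp C f (inv_mor C x y f) = Id C y" by auto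
qed

lemma iso_inv_mor: "groupoid C \<Longrightarrow> f \<in> Hom C x y \<Longrightarrow> iso C y x (inv_mor C x y f)"
  unfolding iso_def using inv_mor[of C f x y] by blast

lemma comp_inv_mor_cancel_right:
  assumes G: "groupoid C" and f: "f \<in> Hom C x y" and g: "g \<in> Hom C y z"
  shows "Comp C (Comp C g f) (inv_mor C x y f) = g"
proof -
  have c: "category C" using G by (rule groupoid_category)
  have "Comp C (Comp C g f) (inv_mor C x y f) = Comp C g (Comp C f (inv_mor C x y f))"
    using comp_assoc[OF c inv_mor_in_Hom[OF G f] f g] by simp
  also have "\<dots> = g" using comp_inv_mor_right[OF G f] comp_Id_right[OF c g] by simp
  finally show ?thesis .
qed

lemma comp_inv_mor_cancel_right':
  assumes G: "groupoid C" and f: "f \<in> Hom C x y" and g: "g \<in> Hom C x z"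
  shows "Comp C (Comp C g (inv_mor C x y f)) f = g"
proof -
  have c: "category C" using G by (rule groupoid_category)
  have "Comp C (Comp C g (inv_mor C x y f)) f = Comp C g (Comp C (inv_mor C x y f) f)"
    using comp_assoc[OF c f inv_mor_in_Hom[OF G f] g] by simp
  also have "\<dots> = g" using comp_inv_mor_left[OF G f] comp_Id_right[OF c g] by simp
  finally show ?thesis .
qed

lemma comp_inv_mor_cancel_left:
  assumes G: "groupoid C" and f: "f \<in> Hom C y z" and g: "g \<in> Hom C x y"
  shows "Comp C (inv_mor C y z f) (Comp C f g) = g"
proof -
  have c: "category C" using G by (rule groupoid_category)
  have "Comp C (inv_mor C y z f) (Comp C f g) = Comp C (Comp C (inv_mor C y z f) f) g"
    using comp_assoc[OF c g f inv_mor_in_Hom[OF G f]] .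
  also have "\<dots> = g" using comp_inv_mor_left[OF G f] comp_Id_left[OF c g] by simp
  finally show ?thesis .
qed

lemma comp_inv_mor_cancel_left':
  assumes G: "groupoid C" and f: "f \<in> Hom C y z" and g: "g \<in> Hom C x z"
  shows "Comp C f (Comp C (inv_mor C y z f) g) = g"
proof -
  have c: "category C" using G by (rule groupoid_category)
  have "Comp C f (Comp C (inv_mor C y z f) g) = Comp C (Comp C f (inv_mor C y z f)) g"
    using comp_assoc[OF c g inv_mor_in_Hom[OF G f] f] .
  also have "\<dots> = g" using comp_inv_mor_right[OF G f] comp_Id_left[OF c g] by simp
  finally show ?thesis .
qed

lemma cancel_right:
  assumes G: "groupoid C" and f: "f \<in> Hom C x y"
    and g1: "g1 \<in> Hom C y z" and g2: "g2 \<in> Hom C y z" and eq: "Comp C g1 f = Comp C g2 f"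
  shows "g1 = g2"
proof -
  have "g1 = Comp C (Comp C g1 f) (inv_mor C x y f)"
    using comp_inv_mor_cancel_right[OF G f g1] by simp
  also have "\<dots> = g2" using eq comp_inv_mor_cancel_right[OF G f g2] by simp
  finally show ?thesis .
qed

lemma cancel_left:
  assumes G: "groupoid C" and f: "f \<in> Hom C y z"
    and g1: "g1 \<in> Hom C x y" and g2: "g2 \<in> Hom C x y" and eq: "Comp C f g1 = Comp C f g2"
  shows "g1 = g2"
proof -
  have "g1 = Comp C (inv_mor C y z f) (Comp C f g1)"
    using comp_inv_mor_cancel_left[OF G f g1] by simp
  also have "\<dots> = g2" using eq comp_inv_mor_cancel_left[OF G f g2] by simp
  finally show ?thesis .
qed

lemma inv_mor_unique:
  assumes G: "groupoid C" and f: "f \<in> Hom C x y" and g: "g \<in> Hom C y x"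
    and gf: "Comp C g f = Id C x"
  shows "inv_mor C x y f = g"
  by (rule cancel_right[OF G f inv_mor_in_Hom[OF G f] g]) (simp add: comp_inv_mor_left[OF G f] gf)

lemma inv_mor_square:
  assumes G: "groupoid C" and p: "p \<in> Hom C x y" and r: "r \<in> Hom C x x'"
    and q: "q \<in> Hom C x' y'" and s: "s \<in> Hom C y y'" and sq: "Comp C s p = Comp C q r"
  shows "Comp C (inv_mor C y y' s) q = Comp C p (inv_mor C x x' r)"
proof -
  have c: "category C" using G by (rule groupoid_category)
  have si: "inv_mor C y y' s \<in> Hom C y' y" using inv_mor_in_Hom[OF G s] .
  have ri: "inv_mor C x x' r \<in> Hom C x' x" using inv_mor_in_Hom[OF G r] .
  have "Comp C s (Comp C p (inv_mor C x x' r)) = Comp C (Comp C q r) (inv_mor C x x' r)"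
    using comp_assoc[OF c ri p s] sq by simp
  also have "\<dots> = q" using comp_inv_mor_cancel_right[OF G r q] .
  also have "\<dots> = Comp C s (Comp C (inv_mor C y y' s) q)"
    using comp_assoc[OF c q si s] comp_inv_mor_right[OF G s] comp_Id_left[OF c q] by simp
  finally show ?thesis
    using cancel_left[OF G s comp_in_Hom[OF c q si] comp_in_Hom[OF c ri p]] by simp
qed

lemma comp_square_paste:
  assumes c: "category C"
    and a: "a \<in> Hom C x0 x1" and b: "b \<in> Hom C y0 y1" and d: "d \<in> Hom C z0 z1"
    and p: "p \<in> Hom C x0 y0" and q: "q \<in> Hom C y0 z0"
    and f: "f \<in> Hom C x1 y1" and g: "g \<in> Hom C y1 z1"
    and sq1: "Comp C f a = Comp C b p" and sq2: "Comp C g b = Comp C d q"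
  shows "Comp C (Comp C g f) a = Comp C d (Comp C q p)"
proof -
  have "Comp C (Comp C g f) a = Comp C g (Comp C b p)"
    using comp_assoc[OF c a f g] sq1 by simp
  also have "\<dots> = Comp C (Comp C d q) p" using comp_assoc[OF c p b g] sq2 by simp
  also have "\<dots> = Comp C d (Comp C q p)" using comp_assoc[OF c p q d] by simp
  finally show ?thesis .
qed

lemma functor_Hom: "is_functor C D FO FM \<Longrightarrow> f \<in> Hom C x y \<Longrightarrow> FM f \<in> Hom D (FO x) (FO y)"
  unfolding is_functor_def by blast

lemma functor_comp: "is_functor C D FO FM \<Longrightarrow> f \<in> Hom C x y \<Longrightarrow> g \<in> Hom C y z \<Longrightarrow>
    FM (Comp C g f) = Comp D (FM g) (FM f)"
  unfolding is_functor_def by blast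

lemma functor_Id: "is_functor C D FO FM \<Longrightarrow> x \<in> Ob C \<Longrightarrow> FM (Id C x) = Id D (FO x)"
  unfolding is_functor_def by blast

lemma functor_Ob: "is_functor C D FO FM \<Longrightarrow> x \<in> Ob C \<Longrightarrow> FO x \<in> Ob D"
  unfolding is_functor_def by blast

lemma functor_inv_mor:
  assumes G: "groupoid C" and H: "groupoid D" and F: "is_functor C D FO FM"
    and f: "f \<in> Hom C x y"
  shows "FM (inv_mor C x y f) = inv_mor D (FO x) (FO y) (FM f)"
proof -
  have x: "x \<in> Ob C" using Hom_dom_in_Ob[OF groupoid_category[OF G] f] .
  have i: "inv_mor C x y f \<in> Hom C y x" using inv_mor_in_Hom[OF G f] .
  have "Comp D (FM (inv_mor C x y f)) (FM f) = Id D (FO x)"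
    using functor_comp[OF F f i] comp_inv_mor_left[OF G f] functor_Id[OF F x] by simp
  then show ?thesis using inv_mor_unique[OF H functor_Hom[OF F f] functor_Hom[OF F i]] by simp
qed

section \<open>The 2-limit and restriction to a subposet\<close>

lemma Ob_twolim_iff:
  "Y \<in> Ob (twolim I Phi PO PM) \<longleftrightarrow>
     (\<forall>U\<in>I. fst Y U \<in> Ob (Phi U)) \<and> (\<forall>U. U \<notin> I \<longrightarrow> fst Y U = undefined) \<and>
     (\<forall>U\<in>I. \<forall>V\<in>I. U \<subseteq> V \<longrightarrow> snd Y U V \<in> Hom (Phi U) (PO U V (fst Y V)) (fst Y U)) \<and>
     (\<forall>U V. \<not> (U \<in> I \<and> V \<in> I \<and> U \<subseteq> V) \<longrightarrow> snd Y U V = undefined) \<and>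
     (\<forall>U\<in>I. snd Y U U = Id (Phi U) (fst Y U)) \<and>
     (\<forall>U\<in>I. \<forall>V\<in>I. \<forall>W\<in>I. U \<subseteq> V \<and> V \<subseteq> W \<longrightarrow>
        snd Y U W = Comp (Phi U) (snd Y U V) (PM U V (snd Y V W)))"
  unfolding twolim_def Let_def by (cases Y) simp

lemma Ob_twolimD:
  assumes "Y \<in> Ob (twolim I Phi PO PM)"
  shows twolim_obj_in_Ob: "U \<in> I \<Longrightarrow> fst Y U \<in> Ob (Phi U)"
    and twolim_obj_undefined: "U \<notin> I \<Longrightarrow> fst Y U = undefined"
    and twolim_conn_in_Hom: "U \<in> I \<Longrightarrow> V \<in> I \<Longrightarrow> U \<subseteq> V \<Longrightarrow>
          snd Y U V \<in> Hom (Phi U) (PO U V (fst Y V)) (fst Y U)"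
    and twolim_conn_undefined: "\<not> (U \<in> I \<and> V \<in> I \<and> U \<subseteq> V) \<Longrightarrow> snd Y U V = undefined"
    and twolim_conn_refl: "U \<in> I \<Longrightarrow> snd Y U U = Id (Phi U) (fst Y U)"
    and twolim_conn_trans: "U \<in> I \<Longrightarrow> V \<in> I \<Longrightarrow> W \<in> I \<Longrightarrow> U \<subseteq> V \<Longrightarrow> V \<subseteq> W \<Longrightarrow>
          snd Y U W = Comp (Phi U) (snd Y U V) (PM U V (snd Y V W))"
proof -
  note Y = assms[unfolded Ob_twolim_iff]
  show "U \<in> I \<Longrightarrow> fst Y U \<in> Ob (Phi U)"
    using Y by (elim conjE) (drule bspec)
  show "U \<notin> I \<Longrightarrow> fst Y U = undefined"
    using Y by (elim conjE) (drule spec, erule mp)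
  show "\<not> (U \<in> I \<and> V \<in> I \<and> U \<subseteq> V) \<Longrightarrow> snd Y U V = undefined"
    using Y by (elim conjE) (drule spec, drule spec, erule mp)
  show "U \<in> I \<Longrightarrow> V \<in> I \<Longrightarrow> U \<subseteq> V \<Longrightarrow> snd Y U V \<in> Hom (Phi U) (PO U V (fst Y V)) (fst Y U)"
    using Y by (elim conjE) (drule bspec, assumption, drule bspec, assumption, erule mp)
  show "U \<in> I \<Longrightarrow> snd Y U U = Id (Phi U) (fst Y U)"
    using Y by (elim conjE) (drule bspec)
  show "U \<in> I \<Longrightarrow> V \<in> I \<Longrightarrow> W \<in> I \<Longrightarrow> U \<subseteq> V \<Longrightarrow> V \<subseteq> W \<Longrightarrow>
      snd Y U W = Comp (Phi U) (snd Y U V) (PM U V (snd Y V W))"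
    using Y by (elim conjE) (drule bspec, assumption, drule bspec, assumption, drule bspec, assumption,
        erule mp, rule conjI)
qed

lemma Ob_twolimI:
  assumes "\<And>U. U \<in> I \<Longrightarrow> fst Y U \<in> Ob (Phi U)"
    and "\<And>U. U \<notin> I \<Longrightarrow> fst Y U = undefined"
    and "\<And>U V. U \<in> I \<Longrightarrow> V \<in> I \<Longrightarrow> U \<subseteq> V \<Longrightarrow>
          snd Y U V \<in> Hom (Phi U) (PO U V (fst Y V)) (fst Y U)"
    and "\<And>U V. \<not> (U \<in> I \<and> V \<in> I \<and> U \<subseteq> V) \<Longrightarrow> snd Y U V = undefined"
    and "\<And>U. U \<in> I \<Longrightarrow> snd Y U U = Id (Phi U) (fst Y U)"
    and "\<And>U V W. U \<in> I \<Longrightarrow> V \<in> I \<Longrightarrow> W \<in> I \<Longrightarrow> U \<subseteq> V \<Longrightarrow> V \<subseteq> W \<Longrightarrow>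
          snd Y U W = Comp (Phi U) (snd Y U V) (PM U V (snd Y V W))"
  shows "Y \<in> Ob (twolim I Phi PO PM)"
  unfolding Ob_twolim_iff
  by (intro conjI ballI allI impI; (elim conjE)?; rule assms; assumption)

lemma Hom_twolim_iff:
  "g \<in> Hom (twolim I Phi PO PM) A B \<longleftrightarrow>
     A \<in> Ob (twolim I Phi PO PM) \<and> B \<in> Ob (twolim I Phi PO PM) \<and>
     (\<forall>U\<in>I. g U \<in> Hom (Phi U) (fst A U) (fst B U)) \<and> (\<forall>U. U \<notin> I \<longrightarrow> g U = undefined) \<and>
     (\<forall>U\<in>I. \<forall>V\<in>I. U \<subseteq> V \<longrightarrow>
        Comp (Phi U) (g U) (snd A U V) = Comp (Phi U) (snd B U V) (PM U V (g V)))"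
  unfolding twolim_def Let_def by simp

lemma Hom_twolimD:
  assumes "g \<in> Hom (twolim I Phi PO PM) A B"
  shows twolim_dom_in_Ob: "A \<in> Ob (twolim I Phi PO PM)"
    and twolim_cod_in_Ob: "B \<in> Ob (twolim I Phi PO PM)"
    and twolim_component_in_Hom: "U \<in> I \<Longrightarrow> g U \<in> Hom (Phi U) (fst A U) (fst B U)"
    and twolim_component_undefined: "U \<notin> I \<Longrightarrow> g U = undefined"
    and twolim_naturality: "U \<in> I \<Longrightarrow> V \<in> I \<Longrightarrow> U \<subseteq> V \<Longrightarrow>
          Comp (Phi U) (g U) (snd A U V) = Comp (Phi U) (snd B U V) (PM U V (g V))"
proof -
  note g = assms[unfolded Hom_twolim_iff]
  show "A \<in> Ob (twolim I Phi PO PM)" using g by (elim conjE)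
  show "B \<in> Ob (twolim I Phi PO PM)" using g by (elim conjE)
  show "U \<in> I \<Longrightarrow> g U \<in> Hom (Phi U) (fst A U) (fst B U)"
    using g by (elim conjE) (drule bspec)
  show "U \<notin> I \<Longrightarrow> g U = undefined"
    using g by (elim conjE) (drule spec, erule mp)
  show "U \<in> I \<Longrightarrow> V \<in> I \<Longrightarrow> U \<subseteq> V \<Longrightarrow>
      Comp (Phi U) (g U) (snd A U V) = Comp (Phi U) (snd B U V) (PM U V (g V))"
    using g by (elim conjE) (drule bspec, assumption, drule bspec, assumption, erule mp)
qed

lemma Hom_twolimI:
  assumes "A \<in> Ob (twolim I Phi PO PM)" and "B \<in> Ob (twolim I Phi PO PM)"
    and "\<And>U. U \<in> I \<Longrightarrow> g U \<in> Hom (Phi U) (fst A U) (fst B U)"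
    and "\<And>U. U \<notin> I \<Longrightarrow> g U = undefined"
    and "\<And>U V. U \<in> I \<Longrightarrow> V \<in> I \<Longrightarrow> U \<subseteq> V \<Longrightarrow>
          Comp (Phi U) (g U) (snd A U V) = Comp (Phi U) (snd B U V) (PM U V (g V))"
  shows "g \<in> Hom (twolim I Phi PO PM) A B"
  unfolding Hom_twolim_iff
  by (intro conjI ballI allI impI; rule assms; assumption)

lemma Comp_twolim:
  "Comp (twolim I Phi PO PM) g f = (\<lambda>U. if U \<in> I then Comp (Phi U) (g U) (f U) else undefined)"
  unfolding twolim_def Let_def by simp

lemma Id_twolim:
  "Id (twolim I Phi PO PM) A = (\<lambda>U. if U \<in> I then Id (Phi U) (fst A U) else undefined)"
  unfolding twolim_def Let_def by simp

lemma gpd_diagram_mono: "gpd_diagram I Phi PO PM \<Longrightarrow> J \<subseteq> I \<Longrightarrow> gpd_diagram J Phi PO PM"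
  unfolding gpd_diagram_def by (meson subsetD)

locale groupoid_diagram =
  fixes I :: "'i set set" and Phi :: "'i set \<Rightarrow> ('o,'m) gcat"
    and PO :: "'i set \<Rightarrow> 'i set \<Rightarrow> 'o \<Rightarrow> 'o" and PM :: "'i set \<Rightarrow> 'i set \<Rightarrow> 'm \<Rightarrow> 'm"
  assumes gpd_diagram: "gpd_diagram I Phi PO PM"
begin

lemma groupoid_Phi: "U \<in> I \<Longrightarrow> groupoid (Phi U)"
  using gpd_diagram unfolding gpd_diagram_def by (elim conjE) (drule bspec)

lemma category_Phi: "U \<in> I \<Longrightarrow> category (Phi U)"
  by (rule groupoid_category[OF groupoid_Phi])

lemma functor_restrict:
  "U \<in> I \<Longrightarrow> V \<in> I \<Longrightarrow> U \<subseteq> V \<Longrightarrow> is_functor (Phi V) (Phi U) (PO U V) (PM U V)"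
  using gpd_diagram unfolding gpd_diagram_def
  by (elim conjE) (drule bspec, assumption, drule bspec, assumption, erule mp)

lemma PO_refl: "U \<in> I \<Longrightarrow> x \<in> Ob (Phi U) \<Longrightarrow> PO U U x = x"
  using gpd_diagram unfolding gpd_diagram_def
  by (elim conjE) (drule bspec, assumption, elim conjE, drule bspec)

lemma restrict_trans:
  assumes "U \<in> I" "V \<in> I" "W \<in> I" "U \<subseteq> V" "V \<subseteq> W"
  shows PO_trans: "x \<in> Ob (Phi W) \<Longrightarrow> PO U V (PO V W x) = PO U W x"
    and PM_trans: "f \<in> Hom (Phi W) x y \<Longrightarrow> PM U V (PM V W f) = PM U W f"
proof -
  have "(\<forall>x\<in>Ob (Phi W). PO U V (PO V W x) = PO U W x) \<and>
      (\<forall>x y f. f \<in> Hom (Phi W) x y \<longrightarrow> PM U V (PM V W f) = PM U W f)"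
    using gpd_diagram assms unfolding gpd_diagram_def
    by (elim conjE) (drule bspec, assumption, drule bspec, assumption, drule bspec, assumption,
        erule mp, rule conjI)
  then show "x \<in> Ob (Phi W) \<Longrightarrow> PO U V (PO V W x) = PO U W x"
    and "f \<in> Hom (Phi W) x y \<Longrightarrow> PM U V (PM V W f) = PM U W f" by blast+
qed

lemma conn_comp_PM_factor:
  assumes B: "B \<in> Ob (twolim I Phi PO PM)" and U: "U \<in> I" and W: "W \<in> I" and T: "T \<in> I"
    and UW: "U \<subseteq> W" and WT: "W \<subseteq> T" and g: "g \<in> Hom (Phi T) x (fst B T)"
  shows "Comp (Phi U) (snd B U T) (PM U T g) =
    Comp (Phi U) (snd B U W) (PM U W (Comp (Phi W) (snd B W T) (PM W T g)))"
proof -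
  note F = functor_restrict[OF U W UW]
  have bWT: "snd B W T \<in> Hom (Phi W) (PO W T (fst B T)) (fst B W)"
    using twolim_conn_in_Hom[OF B W T WT] .
  have gWT: "PM W T g \<in> Hom (Phi W) (PO W T x) (PO W T (fst B T))"
    using functor_Hom[OF functor_restrict[OF W T WT] g] .
  have "Comp (Phi U) (snd B U T) (PM U T g) =
      Comp (Phi U) (Comp (Phi U) (snd B U W) (PM U W (snd B W T))) (PM U W (PM W T g))"
    using twolim_conn_trans[OF B U W T UW WT] PM_trans[OF U W T UW WT g] by simp
  also have "\<dots> = Comp (Phi U) (snd B U W) (PM U W (Comp (Phi W) (snd B W T) (PM W T g)))"
    using comp_assoc[OF category_Phi[OF U] functor_Hom[OF F gWT] functor_Hom[OF F bWT]
        twolim_conn_in_Hom[OF B U W UW]] functor_comp[OF F gWT bWT] by simp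
  finally show ?thesis .
qed

lemma Id_twolim_in_Hom:
  assumes A: "A \<in> Ob (twolim I Phi PO PM)"
  shows "Id (twolim I Phi PO PM) A \<in> Hom (twolim I Phi PO PM) A A"
proof (rule Hom_twolimI[OF A A])
  fix U V assume U: "U \<in> I" and V: "V \<in> I" and UV: "U \<subseteq> V"
  have al: "snd A U V \<in> Hom (Phi U) (PO U V (fst A V)) (fst A U)"
    using twolim_conn_in_Hom[OF A U V UV] .
  have "PM U V (Id (Phi V) (fst A V)) = Id (Phi U) (PO U V (fst A V))"
    using functor_Id[OF functor_restrict[OF U V UV] twolim_obj_in_Ob[OF A V]] .
  then show "Comp (Phi U) (Id (twolim I Phi PO PM) A U) (snd A U V) =
      Comp (Phi U) (snd A U V) (PM U V (Id (twolim I Phi PO PM) A V))"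
    using U V comp_Id_left[OF category_Phi[OF U] al] comp_Id_right[OF category_Phi[OF U] al]
    by (simp add: Id_twolim)
qed (simp_all add: Id_twolim Id_in_Hom category_Phi twolim_obj_in_Ob[OF A])

lemma Comp_twolim_in_Hom:
  assumes f: "f \<in> Hom (twolim I Phi PO PM) A B" and g: "g \<in> Hom (twolim I Phi PO PM) B D"
  shows "Comp (twolim I Phi PO PM) g f \<in> Hom (twolim I Phi PO PM) A D"
proof (rule Hom_twolimI[OF twolim_dom_in_Ob[OF f] twolim_cod_in_Ob[OF g]])
  fix U assume U: "U \<in> I"
  show "Comp (twolim I Phi PO PM) g f U \<in> Hom (Phi U) (fst A U) (fst D U)"
    using U comp_in_Hom[OF category_Phi[OF U] twolim_component_in_Hom[OF f U]
        twolim_component_in_Hom[OF g U]]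
    by (simp add: Comp_twolim)
next
  fix U V assume U: "U \<in> I" and V: "V \<in> I" and UV: "U \<subseteq> V"
  note F = functor_restrict[OF U V UV]
  have fV: "f V \<in> Hom (Phi V) (fst A V) (fst B V)" and gV: "g V \<in> Hom (Phi V) (fst B V) (fst D V)"
    using twolim_component_in_Hom f g V by blast+
  have "Comp (Phi U) (Comp (Phi U) (g U) (f U)) (snd A U V) =
      Comp (Phi U) (snd D U V) (Comp (Phi U) (PM U V (g V)) (PM U V (f V)))"
    by (rule comp_square_paste[OF category_Phi[OF U]
          twolim_conn_in_Hom[OF twolim_dom_in_Ob[OF f] U V UV]
          twolim_conn_in_Hom[OF twolim_cod_in_Ob[OF f] U V UV]
          twolim_conn_in_Hom[OF twolim_cod_in_Ob[OF g] U V UV]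
          functor_Hom[OF F fV] functor_Hom[OF F gV]
          twolim_component_in_Hom[OF f U] twolim_component_in_Hom[OF g U]
          twolim_naturality[OF f U V UV] twolim_naturality[OF g U V UV]])
  then show "Comp (Phi U) (Comp (twolim I Phi PO PM) g f U) (snd A U V) =
      Comp (Phi U) (snd D U V) (PM U V (Comp (twolim I Phi PO PM) g f V))"
    using U V functor_comp[OF F fV gV] by (simp add: Comp_twolim)
qed (simp add: Comp_twolim)

lemma category_twolim: "category (twolim I Phi PO PM)"
  unfolding category_def
proof (intro conjI allI impI ballI)
  fix A B assume "Hom (twolim I Phi PO PM) A B \<noteq> {}"
  then show "A \<in> Ob (twolim I Phi PO PM)" "B \<in> Ob (twolim I Phi PO PM)"
    using twolim_dom_in_Ob twolim_cod_in_Ob by blast+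
next
  fix A B f assume f: "f \<in> Hom (twolim I Phi PO PM) A B"
  show "Comp (twolim I Phi PO PM) f (Id (twolim I Phi PO PM) A) = f"
    "Comp (twolim I Phi PO PM) (Id (twolim I Phi PO PM) B) f = f"
    using comp_Id_right[OF category_Phi twolim_component_in_Hom[OF f]]
      comp_Id_left[OF category_Phi twolim_component_in_Hom[OF f]] twolim_component_undefined[OF f]
    by (auto simp: Comp_twolim Id_twolim)
next
  fix A B D E f g h
  assume "f \<in> Hom (twolim I Phi PO PM) A B \<and> g \<in> Hom (twolim I Phi PO PM) B D \<and>
      h \<in> Hom (twolim I Phi PO PM) D E"
  then have f: "f \<in> Hom (twolim I Phi PO PM) A B" and g: "g \<in> Hom (twolim I Phi PO PM) B D"
    and h: "h \<in> Hom (twolim I Phi PO PM) D E" by blast+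
  show "Comp (twolim I Phi PO PM) h (Comp (twolim I Phi PO PM) g f) =
      Comp (twolim I Phi PO PM) (Comp (twolim I Phi PO PM) h g) f"
    using comp_assoc[OF category_Phi twolim_component_in_Hom[OF f] twolim_component_in_Hom[OF g]
        twolim_component_in_Hom[OF h]]
    by (auto simp: Comp_twolim)
qed (auto intro: Id_twolim_in_Hom Comp_twolim_in_Hom)

lemma inverse_twolim_in_Hom:
  assumes f: "f \<in> Hom (twolim I Phi PO PM) A B"
  shows "(\<lambda>U. if U \<in> I then inv_mor (Phi U) (fst A U) (fst B U) (f U) else undefined)
      \<in> Hom (twolim I Phi PO PM) B A"
proof (rule Hom_twolimI[OF twolim_cod_in_Ob[OF f] twolim_dom_in_Ob[OF f]])
  fix U V assume U: "U \<in> I" and V: "V \<in> I" and UV: "U \<subseteq> V"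
  have fV: "f V \<in> Hom (Phi V) (fst A V) (fst B V)" using twolim_component_in_Hom[OF f V] .
  have "Comp (Phi U) (inv_mor (Phi U) (fst A U) (fst B U) (f U)) (snd B U V) =
      Comp (Phi U) (snd A U V) (inv_mor (Phi U) (PO U V (fst A V)) (PO U V (fst B V)) (PM U V (f V)))"
    by (rule inv_mor_square[OF groupoid_Phi[OF U]
          twolim_conn_in_Hom[OF twolim_dom_in_Ob[OF f] U V UV]
          functor_Hom[OF functor_restrict[OF U V UV] fV]
          twolim_conn_in_Hom[OF twolim_cod_in_Ob[OF f] U V UV]
          twolim_component_in_Hom[OF f U] twolim_naturality[OF f U V UV]])
  then show "Comp (Phi U) (if U \<in> I then inv_mor (Phi U) (fst A U) (fst B U) (f U) else undefined)
      (snd B U V) = Comp (Phi U) (snd A U V)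
        (PM U V (if V \<in> I then inv_mor (Phi V) (fst A V) (fst B V) (f V) else undefined))"
    using U V functor_inv_mor[OF groupoid_Phi[OF V] groupoid_Phi[OF U] functor_restrict[OF U V UV] fV]
    by simp
qed (simp_all add: inv_mor_in_Hom groupoid_Phi twolim_component_in_Hom[OF f])

lemma groupoid_twolim: "groupoid (twolim I Phi PO PM)"
  unfolding groupoid_def
proof (intro conjI allI impI category_twolim)
  fix A B f assume f: "f \<in> Hom (twolim I Phi PO PM) A B"
  let ?g = "\<lambda>U. if U \<in> I then inv_mor (Phi U) (fst A U) (fst B U) (f U) else undefined"
  have "Comp (twolim I Phi PO PM) ?g f = Id (twolim I Phi PO PM) A"
    "Comp (twolim I Phi PO PM) f ?g = Id (twolim I Phi PO PM) B"
    using comp_inv_mor_left[OF groupoid_Phi twolim_component_in_Hom[OF f]]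
      comp_inv_mor_right[OF groupoid_Phi twolim_component_in_Hom[OF f]]
    by (auto simp: Comp_twolim Id_twolim)
  then show "iso (twolim I Phi PO PM) A B f"
    unfolding iso_def using f inverse_twolim_in_Hom[OF f] by blast
qed

end

lemma resO_simps [simp]:
  "fst (resO J A) U = (if U \<in> J then fst A U else undefined)"
  "snd (resO J A) U V = (if U \<in> J \<and> V \<in> J \<and> U \<subseteq> V then snd A U V else undefined)"
  unfolding resO_def by simp_all

lemma resM_apply [simp]: "resM J g U = (if U \<in> J then g U else undefined)"
  unfolding resM_def by simp

lemma resO_self:
  assumes A: "A \<in> Ob (twolim I Phi PO PM)"
  shows "resO I A = A"
proof (rule prod_eqI)
  show "fst (resO I A) = fst A"
    using twolim_obj_undefined[OF A] by (intro ext) simp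
  show "snd (resO I A) = snd A"
  proof (intro ext)
    fix U V show "snd (resO I A) U V = snd A U V"
      using twolim_conn_undefined[OF A, of U V] by simp
  qed
qed

lemma resM_self:
  assumes f: "f \<in> Hom (twolim I Phi PO PM) A B"
  shows "resM I f = f"
  using twolim_component_undefined[OF f] by (intro ext) simp

lemma resO_in_Ob:
  assumes JI: "J \<subseteq> I" and A: "A \<in> Ob (twolim I Phi PO PM)"
  shows "resO J A \<in> Ob (twolim J Phi PO PM)"
proof (rule Ob_twolimI)
  fix U assume "U \<in> J"
  then show "fst (resO J A) U \<in> Ob (Phi U)" using JI twolim_obj_in_Ob[OF A, of U] by auto
next
  fix U V assume "U \<in> J" "V \<in> J" "U \<subseteq> V"
  then show "snd (resO J A) U V \<in> Hom (Phi U) (PO U V (fst (resO J A) V)) (fst (resO J A) U)"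
    using JI twolim_conn_in_Hom[OF A, of U V] by auto
next
  fix U assume "U \<in> J"
  then show "snd (resO J A) U U = Id (Phi U) (fst (resO J A) U)"
    using JI twolim_conn_refl[OF A, of U] by auto
next
  fix U V W assume "U \<in> J" "V \<in> J" "W \<in> J" "U \<subseteq> V" "V \<subseteq> W"
  then show "snd (resO J A) U W = Comp (Phi U) (snd (resO J A) U V) (PM U V (snd (resO J A) V W))"
    using twolim_conn_trans[OF A, of U V W] JI by auto
qed auto

lemma functor_resO:
  assumes JI: "J \<subseteq> I"
  shows "is_functor (twolim I Phi PO PM) (twolim J Phi PO PM) (resO J) (resM J)"
  unfolding is_functor_def
proof (intro conjI ballI allI impI)
  fix A B f assume f: "f \<in> Hom (twolim I Phi PO PM) A B"
  show "resM J f \<in> Hom (twolim J Phi PO PM) (resO J A) (resO J B)"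
  proof (rule Hom_twolimI[OF resO_in_Ob[OF JI twolim_dom_in_Ob[OF f]]
        resO_in_Ob[OF JI twolim_cod_in_Ob[OF f]]])
    fix U assume "U \<in> J"
    then show "resM J f U \<in> Hom (Phi U) (fst (resO J A) U) (fst (resO J B) U)"
      using JI twolim_component_in_Hom[OF f, of U] by auto
  next
    fix U V assume "U \<in> J" "V \<in> J" "U \<subseteq> V"
    then show "Comp (Phi U) (resM J f U) (snd (resO J A) U V) =
        Comp (Phi U) (snd (resO J B) U V) (PM U V (resM J f V))"
      using JI twolim_naturality[OF f, of U V] by auto
  qed simp
next
  fix A assume "A \<in> Ob (twolim I Phi PO PM)"
  then show "resO J A \<in> Ob (twolim J Phi PO PM)" using resO_in_Ob[OF JI] by blast
  show "resM J (Id (twolim I Phi PO PM) A) = Id (twolim J Phi PO PM) (resO J A)"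
    using JI by (intro ext) (auto simp: Id_twolim)
next
  fix A B D f g
  show "resM J (Comp (twolim I Phi PO PM) g f) =
      Comp (twolim J Phi PO PM) (resM J g) (resM J f)"
    using JI by (intro ext) (auto simp: Comp_twolim)
qed

section \<open>Restriction along a covering subposet\<close>

locale covered_diagram = groupoid_diagram +
  fixes J Cov :: "'i set set"
  assumes J_subset: "J \<subseteq> I" and Cov_subset: "Cov \<subseteq> J"
    and covered: "U \<in> I \<Longrightarrow> \<exists>M\<in>Cov. U \<subseteq> M"
begin

definition cover :: "'i set \<Rightarrow> 'i set" where
  "cover U = (SOME M. M \<in> Cov \<and> U \<subseteq> M)"

lemma cover:
  assumes "U \<in> I"
  shows cover_in_Cov: "cover U \<in> Cov" and subset_cover: "U \<subseteq> cover U"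
proof -
  have "cover U \<in> Cov \<and> U \<subseteq> cover U"
    unfolding cover_def using covered[OF assms] by (intro someI_ex[of "\<lambda>M. M \<in> Cov \<and> U \<subseteq> M"]) blast
  then show "cover U \<in> Cov" "U \<subseteq> cover U" by blast+
qed

lemma cover_in_J: "U \<in> I \<Longrightarrow> cover U \<in> J"
  using cover_in_Cov Cov_subset by blast

lemma in_I_if_in_J: "U \<in> J \<Longrightarrow> U \<in> I"
  using J_subset by blast

lemma groupoid_twolim_J: "groupoid (twolim J Phi PO PM)"
  using groupoid_diagram.groupoid_twolim[OF groupoid_diagram.intro]
    gpd_diagram_mono[OF gpd_diagram J_subset] .

text \<open>The component at \<open>U\<close> that naturality along \<open>U \<subseteq> T\<close> forces on any extension of \<open>h\<close>.\<close>

definition extend where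
  "extend A B h T U = Comp (Phi U) (Comp (Phi U) (snd B U T) (PM U T (h T)))
      (inv_mor (Phi U) (PO U T (fst A T)) (fst A U) (snd A U T))"

context
  fixes A B h
  assumes A: "A \<in> Ob (twolim I Phi PO PM)" and B: "B \<in> Ob (twolim I Phi PO PM)"
    and h: "h \<in> Hom (twolim J Phi PO PM) (resO J A) (resO J B)"
begin

lemma restricted_component_in_Hom: "T \<in> J \<Longrightarrow> h T \<in> Hom (Phi T) (fst A T) (fst B T)"
  using twolim_component_in_Hom[OF h] by simp

lemma restricted_naturality:
  "U \<in> J \<Longrightarrow> T \<in> J \<Longrightarrow> U \<subseteq> T \<Longrightarrow>
    Comp (Phi U) (h U) (snd A U T) = Comp (Phi U) (snd B U T) (PM U T (h T))"
  using twolim_naturality[OF h] by simp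

lemma extend_in_Hom:
  assumes U: "U \<in> I" and T: "T \<in> J" and UT: "U \<subseteq> T"
  shows "extend A B h T U \<in> Hom (Phi U) (fst A U) (fst B U)"
proof -
  have T': "T \<in> I" using in_I_if_in_J[OF T] .
  have "Comp (Phi U) (snd B U T) (PM U T (h T)) \<in> Hom (Phi U) (PO U T (fst A T)) (fst B U)"
    using comp_in_Hom[OF category_Phi[OF U]
        functor_Hom[OF functor_restrict[OF U T' UT] restricted_component_in_Hom[OF T]]
        twolim_conn_in_Hom[OF B U T' UT]] .
  then show ?thesis
    unfolding extend_def
    using comp_in_Hom[OF category_Phi[OF U]
        inv_mor_in_Hom[OF groupoid_Phi[OF U] twolim_conn_in_Hom[OF A U T' UT]]] by blast
qed

lemma extend_comp_conn:
  assumes U: "U \<in> I" and T: "T \<in> J" and UT: "U \<subseteq> T"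
  shows "Comp (Phi U) (extend A B h T U) (snd A U T) = Comp (Phi U) (snd B U T) (PM U T (h T))"
proof -
  have T': "T \<in> I" using in_I_if_in_J[OF T] .
  show ?thesis
    unfolding extend_def
    by (rule comp_inv_mor_cancel_right'[OF groupoid_Phi[OF U] twolim_conn_in_Hom[OF A U T' UT]
          comp_in_Hom[OF category_Phi[OF U]
            functor_Hom[OF functor_restrict[OF U T' UT] restricted_component_in_Hom[OF T]]
            twolim_conn_in_Hom[OF B U T' UT]]])
qed

lemma extend_unique:
  assumes U: "U \<in> I" and T: "T \<in> J" and UT: "U \<subseteq> T"
    and g: "g \<in> Hom (Phi U) (fst A U) (fst B U)"
    and g_conn: "Comp (Phi U) g (snd A U T) = Comp (Phi U) (snd B U T) (PM U T (h T))"
  shows "g = extend A B h T U"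
  using cancel_right[OF groupoid_Phi[OF U] twolim_conn_in_Hom[OF A U in_I_if_in_J[OF T] UT] g
      extend_in_Hom[OF U T UT]] g_conn extend_comp_conn[OF U T UT] by simp

lemma extend_on_J:
  assumes U: "U \<in> J" and T: "T \<in> J" and UT: "U \<subseteq> T"
  shows "extend A B h T U = h U"
  using extend_unique[OF in_I_if_in_J[OF U] T UT restricted_component_in_Hom[OF U]
      restricted_naturality[OF U T UT]] by simp

lemma extend_natural:
  assumes U: "U \<in> I" and W: "W \<in> I" and T: "T \<in> J" and UW: "U \<subseteq> W" and WT: "W \<subseteq> T"
  shows "Comp (Phi U) (extend A B h T U) (snd A U W) =
    Comp (Phi U) (snd B U W) (PM U W (extend A B h T W))"
proof -
  have T': "T \<in> I" using in_I_if_in_J[OF T] .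
  have UT: "U \<subseteq> T" using UW WT by blast
  note c = category_Phi[OF U] and F = functor_restrict[OF U W UW]
  have PO_A: "PO U W (PO W T (fst A T)) = PO U T (fst A T)"
    using PO_trans[OF U W T' UW WT] twolim_obj_in_Ob[OF A T'] by blast
  have eU: "extend A B h T U \<in> Hom (Phi U) (fst A U) (fst B U)" using extend_in_Hom[OF U T UT] .
  have eW: "extend A B h T W \<in> Hom (Phi W) (fst A W) (fst B W)" using extend_in_Hom[OF W T WT] .
  have aUW: "snd A U W \<in> Hom (Phi U) (PO U W (fst A W)) (fst A U)"
    and bUW: "snd B U W \<in> Hom (Phi U) (PO U W (fst B W)) (fst B U)"
    using twolim_conn_in_Hom[OF A U W UW] twolim_conn_in_Hom[OF B U W UW] .
  have aWT: "snd A W T \<in> Hom (Phi W) (PO W T (fst A T)) (fst A W)"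
    using twolim_conn_in_Hom[OF A W T' WT] .
  have p: "PM U W (snd A W T) \<in> Hom (Phi U) (PO U T (fst A T)) (PO U W (fst A W))"
    using functor_Hom[OF F aWT] PO_A by simp
  have "Comp (Phi U) (Comp (Phi U) (extend A B h T U) (snd A U W)) (PM U W (snd A W T))
      = Comp (Phi U) (extend A B h T U) (snd A U T)"
    using comp_assoc[OF c p aUW eU] twolim_conn_trans[OF A U W T' UW WT] by simp
  also have "\<dots> = Comp (Phi U) (snd B U T) (PM U T (h T))" using extend_comp_conn[OF U T UT] .
  also have "\<dots> = Comp (Phi U) (snd B U W) (PM U W (Comp (Phi W) (snd B W T) (PM W T (h T))))"
    using conn_comp_PM_factor[OF B U W T' UW WT restricted_component_in_Hom[OF T]] .
  also have "\<dots> = Comp (Phi U) (snd B U W) (PM U W (Comp (Phi W) (extend A B h T W) (snd A W T)))"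
    using extend_comp_conn[OF W T WT] by simp
  also have "\<dots> =
      Comp (Phi U) (Comp (Phi U) (snd B U W) (PM U W (extend A B h T W))) (PM U W (snd A W T))"
    using functor_comp[OF F aWT eW] comp_assoc[OF c p functor_Hom[OF F eW] bUW] by simp
  finally show ?thesis
    using cancel_right[OF groupoid_Phi[OF U] p comp_in_Hom[OF c aUW eU]
        comp_in_Hom[OF c functor_Hom[OF F eW] bUW]] by simp
qed

lemma extend_mono:
  assumes U: "U \<in> I" and T: "T \<in> J" and T': "T' \<in> J" and UT: "U \<subseteq> T" and TT': "T \<subseteq> T'"
  shows "extend A B h T' U = extend A B h T U"
proof -
  have "Comp (Phi U) (extend A B h T' U) (snd A U T) = Comp (Phi U) (snd B U T) (PM U T (h T))"
    using extend_natural[OF U in_I_if_in_J[OF T] T' UT TT'] extend_on_J[OF T T' TT'] by simp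
  then show ?thesis
    using extend_unique[OF U T UT extend_in_Hom[OF U T' order_trans[OF UT TT']]] by simp
qed

end

lemma component_eq_extend:
  assumes f: "f \<in> Hom (twolim I Phi PO PM) A B"
    and U: "U \<in> I" and T: "T \<in> J" and UT: "U \<subseteq> T"
  shows "f U = extend A B (resM J f) T U"
proof (rule extend_unique[OF twolim_dom_in_Ob[OF f] twolim_cod_in_Ob[OF f] _ U T UT])
  show "resM J f \<in> Hom (twolim J Phi PO PM) (resO J A) (resO J B)"
    using functor_Hom[OF functor_resO[OF J_subset] f] .
  show "f U \<in> Hom (Phi U) (fst A U) (fst B U)" using twolim_component_in_Hom[OF f U] .
  show "Comp (Phi U) (f U) (snd A U T) = Comp (Phi U) (snd B U T) (PM U T (resM J f T))"
    using twolim_naturality[OF f U in_I_if_in_J[OF T] UT] T by simp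
qed

theorem faithful_resO: "faithful (twolim I Phi PO PM) (twolim J Phi PO PM) (resO J) (resM J)"
  unfolding faithful_def
proof (intro conjI allI impI functor_resO[OF J_subset])
  fix A B f g
  assume "f \<in> Hom (twolim I Phi PO PM) A B \<and> g \<in> Hom (twolim I Phi PO PM) A B \<and> resM J f = resM J g"
  then have f: "f \<in> Hom (twolim I Phi PO PM) A B" and g: "g \<in> Hom (twolim I Phi PO PM) A B"
    and fg: "resM J f = resM J g" by blast+
  show "f = g"
  proof
    fix U show "f U = g U"
      using component_eq_extend[OF f _ cover_in_J subset_cover]
        component_eq_extend[OF g _ cover_in_J subset_cover] fg
        twolim_component_undefined[OF f] twolim_component_undefined[OF g]
      by (cases "U \<in> I") simp_all
  qed
qed

end

locale pairwise_covered = covered_diagram +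
  assumes meet_in_J: "M \<in> Cov \<Longrightarrow> M' \<in> Cov \<Longrightarrow> M \<inter> M' \<in> J"
begin

lemma extend_cover:
  assumes A: "A \<in> Ob (twolim I Phi PO PM)" and B: "B \<in> Ob (twolim I Phi PO PM)"
    and h: "h \<in> Hom (twolim J Phi PO PM) (resO J A) (resO J B)"
    and U: "U \<in> I" and M: "M \<in> Cov" and UM: "U \<subseteq> M"
  shows "extend A B h M U = extend A B h (cover U) U"
proof -
  have MC: "M \<inter> cover U \<in> J" using meet_in_J[OF M cover_in_Cov[OF U]] .
  have UMC: "U \<subseteq> M \<inter> cover U" using UM subset_cover[OF U] by blast
  have "extend A B h M U = extend A B h (M \<inter> cover U) U"
    using extend_mono[OF A B h U MC _ UMC] M Cov_subset by blast
  also have "\<dots> = extend A B h (cover U) U"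
    using extend_mono[OF A B h U MC cover_in_J[OF U] UMC] by simp
  finally show ?thesis .
qed

theorem full_resO: "full (twolim I Phi PO PM) (twolim J Phi PO PM) (resO J) (resM J)"
  unfolding full_def
proof (intro conjI ballI functor_resO[OF J_subset])
  fix A B h
  assume A: "A \<in> Ob (twolim I Phi PO PM)" and B: "B \<in> Ob (twolim I Phi PO PM)"
    and h: "h \<in> Hom (twolim J Phi PO PM) (resO J A) (resO J B)"
  define f where "f U = (if U \<in> I then extend A B h (cover U) U else undefined)" for U
  have "f \<in> Hom (twolim I Phi PO PM) A B"
  proof (rule Hom_twolimI[OF A B])
    fix U assume "U \<in> I"
    then show "f U \<in> Hom (Phi U) (fst A U) (fst B U)"
      unfolding f_def using extend_in_Hom[OF A B h _ cover_in_J subset_cover] by simp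
  next
    fix U W assume U: "U \<in> I" and W: "W \<in> I" and UW: "U \<subseteq> W"
    have "f U = extend A B h (cover W) U"
      unfolding f_def using U extend_cover[OF A B h U cover_in_Cov[OF W]] UW subset_cover[OF W]
      by simp
    then show "Comp (Phi U) (f U) (snd A U W) = Comp (Phi U) (snd B U W) (PM U W (f W))"
      using extend_natural[OF A B h U W cover_in_J[OF W] UW subset_cover[OF W]] W
      unfolding f_def by simp
  qed (simp add: f_def)
  moreover have "resM J f = h"
  proof
    fix U show "resM J f U = h U"
      using extend_on_J[OF A B h _ cover_in_J subset_cover] in_I_if_in_J
        twolim_component_undefined[OF h]
      unfolding f_def by (cases "U \<in> J") simp_all
  qed
  ultimately show "\<exists>f\<in>Hom (twolim I Phi PO PM) A B. resM J f = h" by blast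
qed

end

section \<open>Transition isomorphisms and the quasi-inverse\<close>

context groupoid_diagram
begin

definition transition where
  "transition Y T M M' =
     Comp (Phi T) (inv_mor (Phi T) (PO T M (fst Y M)) (fst Y T) (snd Y T M)) (snd Y T M')"

context
  fixes K Y
  assumes K: "K \<subseteq> I" and Y: "Y \<in> Ob (twolim K Phi PO PM)"
begin

lemma transition_in_Hom:
  assumes T: "T \<in> K" and M: "M \<in> K" and M': "M' \<in> K" and TM: "T \<subseteq> M" and TM': "T \<subseteq> M'"
  shows "transition Y T M M' \<in> Hom (Phi T) (PO T M' (fst Y M')) (PO T M (fst Y M))"
proof -
  have TI: "T \<in> I" using K T by blast
  show ?thesis
    unfolding transition_def
    using comp_in_Hom[OF category_Phi[OF TI] twolim_conn_in_Hom[OF Y T M' TM']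
        inv_mor_in_Hom[OF groupoid_Phi[OF TI] twolim_conn_in_Hom[OF Y T M TM]]] .
qed

lemma conn_comp_transition:
  assumes T: "T \<in> K" and M: "M \<in> K" and M': "M' \<in> K" and TM: "T \<subseteq> M" and TM': "T \<subseteq> M'"
  shows "Comp (Phi T) (snd Y T M) (transition Y T M M') = snd Y T M'"
proof -
  have TI: "T \<in> I" using K T by blast
  show ?thesis
    unfolding transition_def
    using comp_inv_mor_cancel_left'[OF groupoid_Phi[OF TI] twolim_conn_in_Hom[OF Y T M TM]
        twolim_conn_in_Hom[OF Y T M' TM']] .
qed

lemma transition_unique:
  assumes T: "T \<in> K" and M: "M \<in> K" and M': "M' \<in> K" and TM: "T \<subseteq> M" and TM': "T \<subseteq> M'"
    and g: "g \<in> Hom (Phi T) (PO T M' (fst Y M')) (PO T M (fst Y M))"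
    and g_conn: "Comp (Phi T) (snd Y T M) g = snd Y T M'"
  shows "g = transition Y T M M'"
proof -
  have TI: "T \<in> I" using K T by blast
  show ?thesis
    using cancel_left[OF groupoid_Phi[OF TI] twolim_conn_in_Hom[OF Y T M TM] g
        transition_in_Hom[OF T M M' TM TM']] g_conn conn_comp_transition[OF T M M' TM TM']
    by simp
qed

lemma transition_refl:
  assumes T: "T \<in> K" and M: "M \<in> K" and TM: "T \<subseteq> M"
  shows "transition Y T M M = Id (Phi T) (PO T M (fst Y M))"
proof -
  have T': "T \<in> I" and M': "M \<in> I" using K T M by blast+
  have x: "PO T M (fst Y M) \<in> Ob (Phi T)"
    using functor_Ob[OF functor_restrict[OF T' M' TM] twolim_obj_in_Ob[OF Y M]] .
  show ?thesis
    using transition_unique[OF T M M TM TM Id_in_Hom[OF category_Phi[OF T'] x]]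
      comp_Id_right[OF category_Phi[OF T'] twolim_conn_in_Hom[OF Y T M TM]] by simp
qed

lemma transition_trans:
  assumes T: "T \<in> K" and M: "M \<in> K" and M': "M' \<in> K" and M'': "M'' \<in> K"
    and TM: "T \<subseteq> M" and TM': "T \<subseteq> M'" and TM'': "T \<subseteq> M''"
  shows "Comp (Phi T) (transition Y T M M') (transition Y T M' M'') = transition Y T M M''"
proof (rule transition_unique[OF T M M'' TM TM''])
  have c: "category (Phi T)" using category_Phi K T by blast
  show "Comp (Phi T) (transition Y T M M') (transition Y T M' M'')
      \<in> Hom (Phi T) (PO T M'' (fst Y M'')) (PO T M (fst Y M))"
    using comp_in_Hom[OF c transition_in_Hom[OF T M' M'' TM' TM''] transition_in_Hom[OF T M M' TM TM']] .
  show "Comp (Phi T) (snd Y T M) (Comp (Phi T) (transition Y T M M') (transition Y T M' M'')) =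
      snd Y T M''"
    using comp_assoc[OF c transition_in_Hom[OF T M' M'' TM' TM''] transition_in_Hom[OF T M M' TM TM']
        twolim_conn_in_Hom[OF Y T M TM]]
      conn_comp_transition[OF T M M' TM TM'] conn_comp_transition[OF T M' M'' TM' TM'']
    by simp
qed

lemma conn_comp_PM_transition:
  assumes U: "U \<in> K" and T: "T \<in> K" and M: "M \<in> K" and M': "M' \<in> K"
    and UT: "U \<subseteq> T" and TM: "T \<subseteq> M" and TM': "T \<subseteq> M'"
  shows "Comp (Phi U) (snd Y U M) (PM U T (transition Y T M M')) = snd Y U M'"
proof -
  have UI: "U \<in> I" and TI: "T \<in> I" using K U T by blast+
  note c = category_Phi[OF UI] and F = functor_restrict[OF UI TI UT]
  have x: "transition Y T M M' \<in> Hom (Phi T) (PO T M' (fst Y M')) (PO T M (fst Y M))"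
    using transition_in_Hom[OF T M M' TM TM'] .
  have aTM: "snd Y T M \<in> Hom (Phi T) (PO T M (fst Y M)) (fst Y T)"
    using twolim_conn_in_Hom[OF Y T M TM] .
  have "Comp (Phi U) (snd Y U M) (PM U T (transition Y T M M'))
      = Comp (Phi U) (Comp (Phi U) (snd Y U T) (PM U T (snd Y T M))) (PM U T (transition Y T M M'))"
    using twolim_conn_trans[OF Y U T M UT TM] by simp
  also have "\<dots> = Comp (Phi U) (snd Y U T) (PM U T (Comp (Phi T) (snd Y T M) (transition Y T M M')))"
    using comp_assoc[OF c functor_Hom[OF F x] functor_Hom[OF F aTM] twolim_conn_in_Hom[OF Y U T UT]]
      functor_comp[OF F x aTM] by simp
  also have "\<dots> = snd Y U M'"
    using conn_comp_transition[OF T M M' TM TM'] twolim_conn_trans[OF Y U T M' UT TM'] by simp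
  finally show ?thesis .
qed

lemma PM_transition:
  assumes U: "U \<in> K" and T: "T \<in> K" and M: "M \<in> K" and M': "M' \<in> K"
    and UT: "U \<subseteq> T" and TM: "T \<subseteq> M" and TM': "T \<subseteq> M'"
  shows "PM U T (transition Y T M M') = transition Y U M M'"
proof (rule transition_unique[OF U M M' order_trans[OF UT TM] order_trans[OF UT TM']])
  have UI: "U \<in> I" and TI: "T \<in> I" and MI: "M \<in> I" and M'I: "M' \<in> I" using K U T M M' by blast+
  have "PO U T (PO T M (fst Y M)) = PO U M (fst Y M)" "PO U T (PO T M' (fst Y M')) = PO U M' (fst Y M')"
    using PO_trans[OF UI TI MI UT TM] PO_trans[OF UI TI M'I UT TM'] twolim_obj_in_Ob[OF Y M]
      twolim_obj_in_Ob[OF Y M'] by blast+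
  then show "PM U T (transition Y T M M') \<in> Hom (Phi U) (PO U M' (fst Y M')) (PO U M (fst Y M))"
    using functor_Hom[OF functor_restrict[OF UI TI UT] transition_in_Hom[OF T M M' TM TM']] by simp
  show "Comp (Phi U) (snd Y U M) (PM U T (transition Y T M M')) = snd Y U M'"
    using conn_comp_PM_transition[OF U T M M' UT TM TM'] .
qed

end

lemma transition_natural:
  assumes K: "K \<subseteq> I" and h: "h \<in> Hom (twolim K Phi PO PM) Y Y'"
    and T: "T \<in> K" and M: "M \<in> K" and M': "M' \<in> K" and TM: "T \<subseteq> M" and TM': "T \<subseteq> M'"
  shows "Comp (Phi T) (PM T M (h M)) (transition Y T M M') =
    Comp (Phi T) (transition Y' T M M') (PM T M' (h M'))"
proof -
  note Y = twolim_dom_in_Ob[OF h] and Y' = twolim_cod_in_Ob[OF h]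
  have TI: "T \<in> I" and MI: "M \<in> I" and M'I: "M' \<in> I" using K T M M' by blast+
  note c = category_Phi[OF TI]
  have hM: "PM T M (h M) \<in> Hom (Phi T) (PO T M (fst Y M)) (PO T M (fst Y' M))"
    using functor_Hom[OF functor_restrict[OF TI MI TM] twolim_component_in_Hom[OF h M]] .
  have hM': "PM T M' (h M') \<in> Hom (Phi T) (PO T M' (fst Y M')) (PO T M' (fst Y' M'))"
    using functor_Hom[OF functor_restrict[OF TI M'I TM'] twolim_component_in_Hom[OF h M']] .
  have x: "transition Y T M M' \<in> Hom (Phi T) (PO T M' (fst Y M')) (PO T M (fst Y M))"
    using transition_in_Hom[OF K Y T M M' TM TM'] .
  have x': "transition Y' T M M' \<in> Hom (Phi T) (PO T M' (fst Y' M')) (PO T M (fst Y' M))"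
    using transition_in_Hom[OF K Y' T M M' TM TM'] .
  have a: "snd Y T M \<in> Hom (Phi T) (PO T M (fst Y M)) (fst Y T)"
    using twolim_conn_in_Hom[OF Y T M TM] .
  have a': "snd Y' T M \<in> Hom (Phi T) (PO T M (fst Y' M)) (fst Y' T)"
    using twolim_conn_in_Hom[OF Y' T M TM] .
  have hT: "h T \<in> Hom (Phi T) (fst Y T) (fst Y' T)" using twolim_component_in_Hom[OF h T] .
  have "Comp (Phi T) (snd Y' T M) (Comp (Phi T) (PM T M (h M)) (transition Y T M M'))
      = Comp (Phi T) (Comp (Phi T) (h T) (snd Y T M)) (transition Y T M M')"
    using comp_assoc[OF c x hM a'] twolim_naturality[OF h T M TM] by simp
  also have "\<dots> = Comp (Phi T) (h T) (snd Y T M')"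
    using comp_assoc[OF c x a hT] conn_comp_transition[OF K Y T M M' TM TM'] by simp
  also have "\<dots> = Comp (Phi T) (Comp (Phi T) (snd Y' T M) (transition Y' T M M')) (PM T M' (h M'))"
    using twolim_naturality[OF h T M' TM'] conn_comp_transition[OF K Y' T M M' TM TM'] by simp
  also have "\<dots> = Comp (Phi T) (snd Y' T M) (Comp (Phi T) (transition Y' T M M') (PM T M' (h M')))"
    using comp_assoc[OF c hM' x' a'] by simp
  finally show ?thesis
    using cancel_left[OF groupoid_Phi[OF TI] a' comp_in_Hom[OF c x hM] comp_in_Hom[OF c hM' x']]
    by simp
qed

end

context pairwise_covered
begin

text \<open>
  For \<open>U \<notin> J\<close> the two candidate values at \<open>U\<close> can only be compared through a set of \<open>J\<close>
  below both coverings; this is why the pairwise meets must lie in \<open>J\<close>.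
\<close>

definition glue where
  "glue Y U M M' = PM U (M \<inter> M') (transition Y (M \<inter> M') M M')"

lemma glue_resO:
  assumes "M \<in> Cov" "M' \<in> Cov"
  shows "glue (resO J X) U M M' = glue X U M M'"
  using assms Cov_subset meet_in_J[OF assms] unfolding glue_def transition_def by auto

context
  fixes K Y
  assumes JK: "J \<subseteq> K" and K: "K \<subseteq> I" and Y: "Y \<in> Ob (twolim K Phi PO PM)"
begin

lemma Cov_in_K: "M \<in> Cov \<Longrightarrow> M \<in> K"
  using Cov_subset JK by blast

lemma meet_in_K: "M \<in> Cov \<Longrightarrow> M' \<in> Cov \<Longrightarrow> M \<inter> M' \<in> K"
  using meet_in_J JK by blast

lemma glue_eq_PM_transition:
  assumes U: "U \<in> I" and T: "T \<in> K" and M: "M \<in> Cov" and M': "M' \<in> Cov"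
    and UT: "U \<subseteq> T" and TMM': "T \<subseteq> M \<inter> M'"
  shows "glue Y U M M' = PM U T (transition Y T M M')"
proof -
  have TI: "T \<in> I" and MMI: "M \<inter> M' \<in> I" using K T meet_in_K[OF M M'] by blast+
  have "glue Y U M M' = PM U T (PM T (M \<inter> M') (transition Y (M \<inter> M') M M'))"
    unfolding glue_def
    using PM_trans[OF U TI MMI UT TMM'] transition_in_Hom[OF K Y meet_in_K[OF M M'] Cov_in_K[OF M]
        Cov_in_K[OF M'] Int_lower1 Int_lower2] by simp
  also have "\<dots> = PM U T (transition Y T M M')"
    using PM_transition[OF K Y T meet_in_K[OF M M'] Cov_in_K[OF M] Cov_in_K[OF M'] TMM'] by simp
  finally show ?thesis .
qed

lemma glue_in_Hom:
  assumes U: "U \<in> I" and M: "M \<in> Cov" and M': "M' \<in> Cov" and UMM': "U \<subseteq> M \<inter> M'"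
  shows "glue Y U M M' \<in> Hom (Phi U) (PO U M' (fst Y M')) (PO U M (fst Y M))"
proof -
  have MMI: "M \<inter> M' \<in> I" and MI: "M \<in> I" and M'I: "M' \<in> I"
    using K meet_in_K[OF M M'] Cov_in_K[OF M] Cov_in_K[OF M'] by blast+
  have "PO U (M \<inter> M') (PO (M \<inter> M') M (fst Y M)) = PO U M (fst Y M)"
    "PO U (M \<inter> M') (PO (M \<inter> M') M' (fst Y M')) = PO U M' (fst Y M')"
    using PO_trans[OF U MMI MI UMM'] PO_trans[OF U MMI M'I UMM']
      twolim_obj_in_Ob[OF Y Cov_in_K[OF M]] twolim_obj_in_Ob[OF Y Cov_in_K[OF M']] by auto
  then show ?thesis
    unfolding glue_def
    using functor_Hom[OF functor_restrict[OF U MMI UMM'] transition_in_Hom[OF K Y meet_in_K[OF M M']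
          Cov_in_K[OF M] Cov_in_K[OF M'] Int_lower1 Int_lower2]] by simp
qed

lemma conn_comp_glue:
  assumes U: "U \<in> K" and M: "M \<in> Cov" and M': "M' \<in> Cov" and UMM': "U \<subseteq> M \<inter> M'"
  shows "Comp (Phi U) (snd Y U M) (glue Y U M M') = snd Y U M'"
  unfolding glue_def
  using conn_comp_PM_transition[OF K Y U meet_in_K[OF M M'] Cov_in_K[OF M] Cov_in_K[OF M'] UMM'
      Int_lower1 Int_lower2] .

lemma glue_refl:
  assumes U: "U \<in> I" and M: "M \<in> Cov" and UM: "U \<subseteq> M"
  shows "glue Y U M M = Id (Phi U) (PO U M (fst Y M))"
proof -
  have MI: "M \<in> I" using K Cov_in_K[OF M] by blast
  show ?thesis
    unfolding glue_def
    using transition_refl[OF K Y Cov_in_K[OF M] Cov_in_K[OF M] order_refl]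
      functor_Id[OF functor_restrict[OF U MI UM] twolim_obj_in_Ob[OF Y Cov_in_K[OF M]]]
      PO_refl[OF MI twolim_obj_in_Ob[OF Y Cov_in_K[OF M]]] by simp
qed

lemma PM_glue:
  assumes U: "U \<in> I" and V: "V \<in> I" and M: "M \<in> Cov" and M': "M' \<in> Cov"
    and UV: "U \<subseteq> V" and VMM': "V \<subseteq> M \<inter> M'"
  shows "PM U V (glue Y V M M') = glue Y U M M'"
  unfolding glue_def
  using PM_trans[OF U V _ UV VMM'] K meet_in_K[OF M M'] transition_in_Hom[OF K Y meet_in_K[OF M M']
      Cov_in_K[OF M] Cov_in_K[OF M'] Int_lower1 Int_lower2] by blast

end

lemma glue_natural:
  assumes JK: "J \<subseteq> K" and K: "K \<subseteq> I" and h: "h \<in> Hom (twolim K Phi PO PM) Y Y'"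
    and U: "U \<in> I" and M: "M \<in> Cov" and M': "M' \<in> Cov" and UMM': "U \<subseteq> M \<inter> M'"
  shows "Comp (Phi U) (PM U M (h M)) (glue Y U M M') = Comp (Phi U) (glue Y' U M M') (PM U M' (h M'))"
proof -
  note Y = twolim_dom_in_Ob[OF h] and Y' = twolim_cod_in_Ob[OF h]
  let ?T = "M \<inter> M'"
  have T: "?T \<in> K" and MK: "M \<in> K" and M'K: "M' \<in> K"
    using meet_in_K[OF JK K Y M M'] Cov_in_K[OF JK K Y M] Cov_in_K[OF JK K Y M'] .
  have TI: "?T \<in> I" and MI: "M \<in> I" and M'I: "M' \<in> I" using K T MK M'K by blast+
  note F = functor_restrict[OF U TI UMM']
  have hM: "PM U M (h M) = PM U ?T (PM ?T M (h M))"
    and hM': "PM U M' (h M') = PM U ?T (PM ?T M' (h M'))"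
    using PM_trans[OF U TI MI UMM' Int_lower1 twolim_component_in_Hom[OF h MK]]
      PM_trans[OF U TI M'I UMM' Int_lower2 twolim_component_in_Hom[OF h M'K]] by simp_all
  show ?thesis
    unfolding glue_def hM hM'
    using transition_natural[OF K h T MK M'K Int_lower1 Int_lower2]
      functor_comp[OF F transition_in_Hom[OF K Y T MK M'K Int_lower1 Int_lower2]
        functor_Hom[OF functor_restrict[OF TI MI Int_lower1] twolim_component_in_Hom[OF h MK]]]
      functor_comp[OF F functor_Hom[OF functor_restrict[OF TI M'I Int_lower2]
          twolim_component_in_Hom[OF h M'K]] transition_in_Hom[OF K Y' T MK M'K Int_lower1 Int_lower2]]
    by simp
qed

end

locale triplewise_covered = pairwise_covered +
  assumes meet3_in_J: "M \<in> Cov \<Longrightarrow> M' \<in> Cov \<Longrightarrow> M'' \<in> Cov \<Longrightarrow> M \<inter> M' \<inter> M'' \<in> J"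
begin

lemma glue_trans:
  assumes JK: "J \<subseteq> K" and K: "K \<subseteq> I" and Y: "Y \<in> Ob (twolim K Phi PO PM)"
    and U: "U \<in> I" and M: "M \<in> Cov" and M': "M' \<in> Cov" and M'': "M'' \<in> Cov"
    and UM: "U \<subseteq> M \<inter> M' \<inter> M''"
  shows "Comp (Phi U) (glue Y U M M') (glue Y U M' M'') = glue Y U M M''"
proof -
  let ?T = "M \<inter> M' \<inter> M''"
  have T: "?T \<in> K" using meet3_in_J[OF M M' M''] JK by blast
  have TI: "?T \<in> I" using K T by blast
  note MK = Cov_in_K[OF JK K Y M] and M'K = Cov_in_K[OF JK K Y M'] and M''K = Cov_in_K[OF JK K Y M'']
  have "glue Y U M M' = PM U ?T (transition Y ?T M M')"
    "glue Y U M' M'' = PM U ?T (transition Y ?T M' M'')"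
    "glue Y U M M'' = PM U ?T (transition Y ?T M M'')"
    using glue_eq_PM_transition[OF JK K Y U T] M M' M'' UM by auto
  moreover have TM: "?T \<subseteq> M" "?T \<subseteq> M'" "?T \<subseteq> M''" by blast+
  ultimately show ?thesis
    using functor_comp[OF functor_restrict[OF U TI UM]
        transition_in_Hom[OF K Y T M'K M''K TM(2,3)] transition_in_Hom[OF K Y T MK M'K TM(1,2)]]
      transition_trans[OF K Y T MK M'K M''K TM] by simp
qed

definition glued_obj where
  "glued_obj Y =
     ((\<lambda>U. if U \<in> I then PO U (cover U) (fst Y (cover U)) else undefined),
      (\<lambda>U W. if U \<in> I \<and> W \<in> I \<and> U \<subseteq> W then glue Y U (cover U) (cover W) else undefined))"

definition glued_mor where
  "glued_mor h = (\<lambda>U. if U \<in> I then PM U (cover U) (h (cover U)) else undefined)"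

text \<open>
  For \<open>K = J\<close> this is the counit of the equivalence; for \<open>K = I\<close> it is the inverse of the unit,
  because \<open>glued_obj\<close> only reads an object on \<open>J\<close>.
\<close>

definition counit where
  "counit K Y = (\<lambda>U. if U \<in> K then snd Y U (cover U) else undefined)"

lemma glued_obj_resO: "glued_obj (resO J X) = glued_obj X"
  unfolding glued_obj_def by (auto intro!: ext simp: cover_in_J cover_in_Cov glue_resO)

lemma glued_mor_resM: "glued_mor (resM J f) = glued_mor f"
  unfolding glued_mor_def using cover_in_J by (auto intro!: ext)

context
  fixes K
  assumes JK: "J \<subseteq> K" and K: "K \<subseteq> I"
begin

lemma cover_in_K: "U \<in> I \<Longrightarrow> cover U \<in> K"
  using cover_in_J JK by blast

lemma glued_obj_in_Ob:
  assumes Y: "Y \<in> Ob (twolim K Phi PO PM)"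
  shows "glued_obj Y \<in> Ob (twolim I Phi PO PM)"
proof (rule Ob_twolimI)
  fix U assume U: "U \<in> I"
  show "fst (glued_obj Y) U \<in> Ob (Phi U)"
    unfolding glued_obj_def
    using U K cover_in_K[OF U]
      functor_Ob[OF functor_restrict[OF U _ subset_cover[OF U]]
        twolim_obj_in_Ob[OF Y cover_in_K[OF U]]]
    by auto
  show "snd (glued_obj Y) U U = Id (Phi U) (fst (glued_obj Y) U)"
    unfolding glued_obj_def
    using U glue_refl[OF JK K Y U cover_in_Cov[OF U] subset_cover[OF U]] by simp
next
  fix U W assume U: "U \<in> I" and W: "W \<in> I" and UW: "U \<subseteq> W"
  have UcW: "U \<subseteq> cover W" using UW subset_cover[OF W] by blast
  have "PO U W (PO W (cover W) (fst Y (cover W))) = PO U (cover W) (fst Y (cover W))"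
    using PO_trans[OF U W _ UW subset_cover[OF W]] K cover_in_K[OF W]
      twolim_obj_in_Ob[OF Y cover_in_K[OF W]] by blast
  then show "snd (glued_obj Y) U W \<in> Hom (Phi U) (PO U W (fst (glued_obj Y) W)) (fst (glued_obj Y) U)"
    unfolding glued_obj_def
    using U W UW glue_in_Hom[OF JK K Y U cover_in_Cov[OF U] cover_in_Cov[OF W]] subset_cover[OF U] UcW
    by simp
next
  fix U V W assume U: "U \<in> I" and V: "V \<in> I" and W: "W \<in> I" and UV: "U \<subseteq> V" and VW: "V \<subseteq> W"
  have "U \<subseteq> cover U \<inter> cover V \<inter> cover W"
    using subset_cover[OF U] subset_cover[OF V] subset_cover[OF W] UV VW by blast
  then have "glue Y U (cover U) (cover W) =
      Comp (Phi U) (glue Y U (cover U) (cover V)) (glue Y U (cover V) (cover W))"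
    using glue_trans[OF JK K Y U cover_in_Cov[OF U] cover_in_Cov[OF V] cover_in_Cov[OF W]] by simp
  also have "\<dots> = Comp (Phi U) (glue Y U (cover U) (cover V)) (PM U V (glue Y V (cover V) (cover W)))"
    using PM_glue[OF JK K Y U V cover_in_Cov[OF V] cover_in_Cov[OF W] UV]
      subset_cover[OF V] subset_cover[OF W] VW by auto
  finally show "snd (glued_obj Y) U W =
      Comp (Phi U) (snd (glued_obj Y) U V) (PM U V (snd (glued_obj Y) V W))"
    unfolding glued_obj_def using U V W UV VW by auto
qed (auto simp: glued_obj_def)

lemma glued_mor_in_Hom:
  assumes h: "h \<in> Hom (twolim K Phi PO PM) Y Y'"
  shows "glued_mor h \<in> Hom (twolim I Phi PO PM) (glued_obj Y) (glued_obj Y')"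
proof (rule Hom_twolimI[OF glued_obj_in_Ob[OF twolim_dom_in_Ob[OF h]]
      glued_obj_in_Ob[OF twolim_cod_in_Ob[OF h]]])
  fix U assume U: "U \<in> I"
  have "cover U \<in> K" "cover U \<in> I" using cover_in_J[OF U] JK K by blast+
  then show "glued_mor h U \<in> Hom (Phi U) (fst (glued_obj Y) U) (fst (glued_obj Y') U)"
    unfolding glued_mor_def glued_obj_def
    using U functor_Hom[OF functor_restrict[OF U _ subset_cover[OF U]] twolim_component_in_Hom[OF h]]
    by simp
next
  fix U W assume U: "U \<in> I" and W: "W \<in> I" and UW: "U \<subseteq> W"
  have cW: "cover W \<in> K" "cover W \<in> I" using cover_in_J[OF W] JK K by blast+
  have "PM U W (PM W (cover W) (h (cover W))) = PM U (cover W) (h (cover W))"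
    using PM_trans[OF U W cW(2) UW subset_cover[OF W] twolim_component_in_Hom[OF h cW(1)]] .
  then show "Comp (Phi U) (glued_mor h U) (snd (glued_obj Y) U W) =
      Comp (Phi U) (snd (glued_obj Y') U W) (PM U W (glued_mor h W))"
    unfolding glued_mor_def glued_obj_def
    using U W UW glue_natural[OF JK K h U cover_in_Cov[OF U] cover_in_Cov[OF W]]
      subset_cover[OF U] subset_cover[OF W] by auto
qed (simp add: glued_mor_def)

lemma counit_in_Hom:
  assumes Y: "Y \<in> Ob (twolim K Phi PO PM)"
  shows "counit K Y \<in> Hom (twolim K Phi PO PM) (resO K (glued_obj Y)) Y"
proof (rule Hom_twolimI[OF resO_in_Ob[OF K glued_obj_in_Ob[OF Y]] Y])
  fix U assume U: "U \<in> K"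
  have UI: "U \<in> I" using K U by blast
  show "counit K Y U \<in> Hom (Phi U) (fst (resO K (glued_obj Y)) U) (fst Y U)"
    unfolding counit_def glued_obj_def
    using U UI twolim_conn_in_Hom[OF Y U cover_in_K[OF UI] subset_cover[OF UI]]
    by simp
next
  fix U W assume U: "U \<in> K" and W: "W \<in> K" and UW: "U \<subseteq> W"
  have UI: "U \<in> I" and WI: "W \<in> I" using K U W by blast+
  have "Comp (Phi U) (snd Y U (cover U)) (glue Y U (cover U) (cover W)) = snd Y U (cover W)"
    using conn_comp_glue[OF JK K Y U cover_in_Cov[OF UI] cover_in_Cov[OF WI]]
      subset_cover[OF UI] subset_cover[OF WI] UW by blast
  also have "\<dots> = Comp (Phi U) (snd Y U W) (PM U W (snd Y W (cover W)))"
    using twolim_conn_trans[OF Y U W cover_in_K[OF WI] UW subset_cover[OF WI]] .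
  finally show "Comp (Phi U) (counit K Y U) (snd (resO K (glued_obj Y)) U W) =
      Comp (Phi U) (snd Y U W) (PM U W (counit K Y W))"
    unfolding counit_def glued_obj_def using U W UI WI UW by simp
qed (simp add: counit_def)

lemma counit_natural:
  assumes h: "h \<in> Hom (twolim K Phi PO PM) Y Y'"
  shows "Comp (twolim K Phi PO PM) (counit K Y') (resM K (glued_mor h)) =
    Comp (twolim K Phi PO PM) h (counit K Y)"
proof
  fix U show "Comp (twolim K Phi PO PM) (counit K Y') (resM K (glued_mor h)) U =
      Comp (twolim K Phi PO PM) h (counit K Y) U"
  proof (cases "U \<in> K")
    case True
    then have UI: "U \<in> I" using K by blast
    show ?thesis
      unfolding Comp_twolim counit_def glued_mor_def
      using True UI twolim_naturality[OF h True _ subset_cover[OF UI]] cover_in_J[OF UI] JK by auto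
  qed (simp add: Comp_twolim)
qed

end

lemma functor_glued: "is_functor (twolim J Phi PO PM) (twolim I Phi PO PM) glued_obj glued_mor"
  unfolding is_functor_def
proof (intro conjI ballI allI impI)
  fix Y assume Y: "Y \<in> Ob (twolim J Phi PO PM)"
  show "glued_obj Y \<in> Ob (twolim I Phi PO PM)" using glued_obj_in_Ob[OF order_refl J_subset Y] .
  show "glued_mor (Id (twolim J Phi PO PM) Y) = Id (twolim I Phi PO PM) (glued_obj Y)"
  proof
    fix U show "glued_mor (Id (twolim J Phi PO PM) Y) U = Id (twolim I Phi PO PM) (glued_obj Y) U"
      unfolding glued_mor_def glued_obj_def Id_twolim
      using functor_Id[OF functor_restrict[OF _ in_I_if_in_J[OF cover_in_J] subset_cover]
          twolim_obj_in_Ob[OF Y cover_in_J]] cover_in_J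
      by simp
  qed
next
  fix Y Y' h assume "h \<in> Hom (twolim J Phi PO PM) Y Y'"
  then show "glued_mor h \<in> Hom (twolim I Phi PO PM) (glued_obj Y) (glued_obj Y')"
    using glued_mor_in_Hom[OF order_refl J_subset] by blast
next
  fix Y Y' Y'' f g
  assume "f \<in> Hom (twolim J Phi PO PM) Y Y' \<and> g \<in> Hom (twolim J Phi PO PM) Y' Y''"
  then have f: "f \<in> Hom (twolim J Phi PO PM) Y Y'" and g: "g \<in> Hom (twolim J Phi PO PM) Y' Y''"
    by blast+
  show "glued_mor (Comp (twolim J Phi PO PM) g f) =
      Comp (twolim I Phi PO PM) (glued_mor g) (glued_mor f)"
  proof
    fix U show "glued_mor (Comp (twolim J Phi PO PM) g f) U =
        Comp (twolim I Phi PO PM) (glued_mor g) (glued_mor f) U"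
      unfolding glued_mor_def Comp_twolim
      using functor_comp[OF functor_restrict[OF _ in_I_if_in_J[OF cover_in_J] subset_cover]
          twolim_component_in_Hom[OF f cover_in_J] twolim_component_in_Hom[OF g cover_in_J]]
        cover_in_J
      by simp
  qed
qed

lemma unit_in_Hom:
  assumes X: "X \<in> Ob (twolim I Phi PO PM)"
  shows "counit I X \<in> Hom (twolim I Phi PO PM) (glued_obj (resO J X)) X"
  using counit_in_Hom[OF J_subset order_refl X] resO_self[OF glued_obj_in_Ob[OF J_subset order_refl X]]
    glued_obj_resO by simp

lemma unit_natural:
  assumes f: "f \<in> Hom (twolim I Phi PO PM) X Y"
  shows "Comp (twolim I Phi PO PM) (counit I Y) (glued_mor (resM J f)) =
    Comp (twolim I Phi PO PM) f (counit I X)"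
  using counit_natural[OF J_subset order_refl f]
    resM_self[OF glued_mor_in_Hom[OF J_subset order_refl f]] glued_mor_resM by simp

theorem equivalence_resO:
  "equivalence (twolim I Phi PO PM) (twolim J Phi PO PM) (resO J) (resM J)"
  unfolding equivalence_def
proof (intro conjI exI functor_resO[OF J_subset])
  let ?C = "twolim I Phi PO PM" and ?D = "twolim J Phi PO PM"
  show "nat_iso ?C ?C id id (glued_obj \<circ> resO J) (glued_mor \<circ> resM J)
      (\<lambda>X. inv_mor ?C (glued_obj (resO J X)) X (counit I X))"
    unfolding nat_iso_def
  proof (intro conjI ballI allI impI)
    fix X assume "X \<in> Ob ?C"
    then show "iso ?C (id X) ((glued_obj \<circ> resO J) X)
        (inv_mor ?C (glued_obj (resO J X)) X (counit I X))"
      using iso_inv_mor[OF groupoid_twolim unit_in_Hom] by simp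
  next
    fix X Y f assume f: "f \<in> Hom ?C X Y"
    show "Comp ?C (inv_mor ?C (glued_obj (resO J Y)) Y (counit I Y)) (id f) =
        Comp ?C ((glued_mor \<circ> resM J) f) (inv_mor ?C (glued_obj (resO J X)) X (counit I X))"
      using inv_mor_square[OF groupoid_twolim
          functor_Hom[OF functor_glued functor_Hom[OF functor_resO[OF J_subset] f]]
          unit_in_Hom[OF twolim_dom_in_Ob[OF f]] f unit_in_Hom[OF twolim_cod_in_Ob[OF f]]
          unit_natural[OF f]]
      by simp
  qed
  show "nat_iso ?D ?D (resO J \<circ> glued_obj) (resM J \<circ> glued_mor) id id (counit J)"
    unfolding nat_iso_def
  proof (intro conjI ballI allI impI)
    fix Y assume "Y \<in> Ob ?D"
    then show "iso ?D ((resO J \<circ> glued_obj) Y) (id Y) (counit J Y)"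
      using groupoid_iso[OF groupoid_twolim_J counit_in_Hom[OF order_refl J_subset]] by simp
  next
    fix Y Y' h assume "h \<in> Hom ?D Y Y'"
    then show "Comp ?D (counit J Y') ((resM J \<circ> glued_mor) h) = Comp ?D (id h) (counit J Y)"
      using counit_natural[OF order_refl J_subset] by simp
  qed
qed (rule functor_glued)

end

section \<open>Subsets of \<open>[n]\<close>\<close>

lemma Bposet_k_subset: "Bposet_k n k \<subseteq> Bposet n"
  unfolding Bposet_def Bposet_k_def by blast

lemma Diff_in_Bposet_k:
  assumes "S \<subseteq> {1..n}" "S \<noteq> {}" "k + card S \<le> n"
  shows "{1..n} - S \<in> Bposet_k n k"
proof -
  have "card ({1..n} - S) = n - card S"
    using assms(1) by (simp add: card_Diff_subset finite_subset)
  then show ?thesis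
    unfolding Bposet_k_def using assms by auto
qed

lemma coatom_meet_in_Bposet_k:
  assumes "i \<in> {1..n}" "j \<in> {1..n}" "k + 2 \<le> n"
  shows "({1..n} - {i}) \<inter> ({1..n} - {j}) \<in> Bposet_k n k"
proof -
  have "card {i, j} \<le> 2" by (simp add: card_insert_if)
  then have "{1..n} - {i, j} \<in> Bposet_k n k" using assms by (intro Diff_in_Bposet_k) auto
  moreover have "({1..n} - {i}) \<inter> ({1..n} - {j}) = {1..n} - {i, j}" by blast
  ultimately show ?thesis by simp
qed

lemma coatom_meet3_in_Bposet_k:
  assumes "i \<in> {1..n}" "j \<in> {1..n}" "l \<in> {1..n}" "k + 3 \<le> n"
  shows "({1..n} - {i}) \<inter> ({1..n} - {j}) \<inter> ({1..n} - {l}) \<in> Bposet_k n k"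
proof -
  have "card {i, j, l} \<le> 3" by (simp add: card_insert_if)
  then have "{1..n} - {i, j, l} \<in> Bposet_k n k" using assms by (intro Diff_in_Bposet_k) auto
  moreover have "({1..n} - {i}) \<inter> ({1..n} - {j}) \<inter> ({1..n} - {l}) = {1..n} - {i, j, l}" by blast
  ultimately show ?thesis by simp
qed

lemma Bposet_covered: "U \<in> Bposet n \<Longrightarrow> \<exists>i\<in>{1..n}. U \<subseteq> {1..n} - {i}"
  unfolding Bposet_def by blast

theorem proposition5p1:
  fixes n k :: nat
    and Phi :: "nat set \<Rightarrow> ('o,'m) gcat"
    and PO :: "nat set \<Rightarrow> nat set \<Rightarrow> 'o \<Rightarrow> 'o"
    and PM :: "nat set \<Rightarrow> nat set \<Rightarrow> 'm \<Rightarrow> 'm"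
  assumes "k < n"
    and "gpd_diagram (Bposet n) Phi PO PM"
  shows "faithful (twolim (Bposet n) Phi PO PM) (twolim (Bposet_k n k) Phi PO PM)
           (resO (Bposet_k n k)) (resM (Bposet_k n k)) \<and>
         (k + 2 \<le> n \<longrightarrow>
           full (twolim (Bposet n) Phi PO PM) (twolim (Bposet_k n k) Phi PO PM)
             (resO (Bposet_k n k)) (resM (Bposet_k n k)) \<and>
           faithful (twolim (Bposet n) Phi PO PM) (twolim (Bposet_k n k) Phi PO PM)
             (resO (Bposet_k n k)) (resM (Bposet_k n k))) \<and>
         (k + 3 \<le> n \<longrightarrow>
           equivalence (twolim (Bposet n) Phi PO PM) (twolim (Bposet_k n k) Phi PO PM)
             (resO (Bposet_k n k)) (resM (Bposet_k n k)))"
proof -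
  let ?Cov = "(\<lambda>i. {1..n} - {i}) ` {1..n}"
  interpret covered_diagram "Bposet n" Phi PO PM "Bposet_k n k" ?Cov
    using assms Bposet_k_subset Bposet_covered Diff_in_Bposet_k[of "{_}" n k]
    by unfold_locales auto
  have full: "full (twolim (Bposet n) Phi PO PM) (twolim (Bposet_k n k) Phi PO PM)
      (resO (Bposet_k n k)) (resM (Bposet_k n k))" if "k + 2 \<le> n"
  proof -
    interpret pairwise_covered "Bposet n" Phi PO PM "Bposet_k n k" ?Cov
      using that coatom_meet_in_Bposet_k by unfold_locales auto
    show ?thesis by (rule full_resO)
  qed
  have equivalence: "equivalence (twolim (Bposet n) Phi PO PM) (twolim (Bposet_k n k) Phi PO PM)
      (resO (Bposet_k n k)) (resM (Bposet_k n k))" if "k + 3 \<le> n"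
  proof -
    interpret triplewise_covered "Bposet n" Phi PO PM "Bposet_k n k" ?Cov
      using that coatom_meet_in_Bposet_k coatom_meet3_in_Bposet_k by unfold_locales auto
    show ?thesis by (rule equivalence_resO)
  qed
  show ?thesis using faithful_resO full equivalence by simp
qed

end
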